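(* The labelled transition system of CPC is structurally image finite: for every CPC process $P$ and every label $\mu$, the set $\{P' : P\xrightarrow{\mu}P'\}$ contains only finitely many equivalence classes with respect to structural congruence $\equiv$.
   Context: Concurrent pattern calculus (CPC). Fix a countable set $\mathcal N$ of names. Patterns are $p ::= \lambda x \mid x \mid \ulcorner x\urcorner \mid p\bullet p$ (binding name, variable name, protected name, compound; $\bullet$ is left associative). ${\sf bn}(p)$, ${\sf vn}(p)$, ${\sf pn}(p)$ denote the sets of names occurring in $p$ as binding, variable and protected names, and ${\sf fn}(p)={\sf vn}(p)\cup{\sf pn}(p)$. A pattern is well formed if its binding names are pairwise distinct and distinct from its free names; all patterns are assumed well formed. A pattern is communicable if it contains no protected and no binding names; protection extends to communicable patterns by $\ulcorner p\bullet q\urcorner=\ulcorner p\urcorner\bullet\ulcorner q\urcorner$. A substitution is a partial function with finite domain from names to communicable patterns. On patterns: $\sigma x=\sigma(x)$ if $x\in{\sf dom}(\sigma)$ else $x$; $\sigma\ulcorner x\urcorner=\ulcorner\sigma(x)\urcorner$ if $x\in{\sf dom}(\sigma)$ else $\ulcorner x\urcorner$; $\sigma(\lambda x)=\lambda x$; $\sigma(p\bullet q)=\sigma p\bullet\sigma q$. Unification $\{p\,\|\,q\}$ is a pair of substitutions or undefined: $\{x\|x\}=\{x\|\ulcorner x\urcorner\}=\{\ulcorner x\urcorner\|x\}=\{\ulcorner x\urcorner\|\ulcorner x\urcorner\}=(\{\},\{\})$; $\{\lambda x\|q\}=(\{q/x\},\{\})$ if $q$ is communicable; $\{p\|\lambda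 x\}=(\{\},\{p/x\})$ if $p$ is communicable; $\{p_1\bullet p_2\|q_1\bullet q_2\}=(\sigma_1\cup\sigma_2,\rho_1\cup\rho_2)$ if $\{p_i\|q_i\}=(\sigma_i,\rho_i)$ for $i=1,2$; undefined otherwise. Processes: $P ::= 0 \mid P|P \mid\ !P \mid (\nu x)P \mid p\to P$ (the binding names of $p$ bind in $P$; ${\sf fn}(p\to P)={\sf fn}(p)\cup({\sf fn}(P)\setminus{\sf bn}(p))$; other free names as usual). Substitution on processes is capture avoiding (up to $\alpha$-conversion). Structural congruence $\equiv$ is the least congruence containing $\alpha$-conversion and $P|0\equiv P$, $P|Q\equiv Q|P$, $P|(Q|R)\equiv(P|Q)|R$, $(\nu n)0\equiv 0$, $(\nu n)(\nu m)P\equiv(\nu m)(\nu n)P$, $!P\equiv P|!P$, $P|(\nu n)Q\equiv(\nu n)(P|Q)$ if $n\notin{\sf fn}(P)$. Labelled transitions: labels $\mu::=\tau\mid(\nu\tilde n)p$. Rules (up to $\alpha$-conversion; parint and parext also have symmetric versions): case: $p\to P\xrightarrow{p}P$; resnon: $P\xrightarrow{\mu}P'$ implies $(\nu n)P\xrightarrow{\mu}(\nu n)P'$ if $n$ does not occur in $\mu$; open: $P\xrightarrow{(\nu\tilde n)p}P'$ implies $(\nu m)P\xrightarrow{(\nu\tilde n,m)p}P'$ if $m\in{\sf vn}(p)\setminus(\tilde n\cup{\sf pn}(p)\cup{\sf bn}(p))$; unify: $P\xrightarrow{(\nu\tilde m)p}P'$ and $Q\xrightarrow{(\nu\tilde n)q}Q'$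 imply $P|Q\xrightarrow{\tau}(\nu\tilde m\tilde n)(\sigma P'|\rho Q')$ if $\{p\|q\}=(\sigma,\rho)$, $\tilde m\cap{\sf fn}(Q)=\tilde n\cap{\sf fn}(P)=\tilde m\cap\tilde n=\emptyset$; parint: $P\xrightarrow{\tau}P'$ implies $P|Q\xrightarrow{\tau}P'|Q$; parext: $P\xrightarrow{(\nu\tilde n)p}P'$ implies $P|Q\xrightarrow{(\nu\tilde n)p}P'|Q$ if $(\tilde n\cup{\sf bn}(p))\cap{\sf fn}(Q)=\emptyset$; rep: $!P|P\xrightarrow{\mu}P'$ implies $!P\xrightarrow{\mu}P'$. *)

theory Defs
  imports Main
begin

type_synonym name = nat

datatype pat = PBind name | PVar name | PProt name | PComp pat pat

fun bn_list :: "pat \<Rightarrow> name list" where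
  "bn_list (PBind x) = [x]"
| "bn_list (PVar x) = []"
| "bn_list (PProt x) = []"
| "bn_list (PComp p q) = bn_list p @ bn_list q"

definition bn :: "pat \<Rightarrow> name set" where
  "bn p = set (bn_list p)"

fun vn :: "pat \<Rightarrow> name set" where
  "vn (PBind x) = {}"
| "vn (PVar x) = {x}"
| "vn (PProt x) = {}"
| "vn (PComp p q) = vn p \<union> vn q"

fun pn :: "pat \<Rightarrow> name set" where
  "pn (PBind x) = {}"
| "pn (PVar x) = {}"
| "pn (PProt x) = {x}"
| "pn (PComp p q) = pn p \<union> pn q"

definition fnp :: "pat \<Rightarrow> name set" where
  "fnp p = vn p \<union> pn p"

definition wf_pat :: "pat \<Rightarrow> bool" where
  "wf_pat p \<longleftrightarrow> distinct (bn_list p) \<and> bn p \<inter> fnp p = {}"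

fun communicable :: "pat \<Rightarrow> bool" where
  "communicable (PBind x) = False"
| "communicable (PVar x) = True"
| "communicable (PProt x) = False"
| "communicable (PComp p q) = (communicable p \<and> communicable q)"

text \<open>Protection of a communicable pattern (identity on other patterns, never used there).\<close>
fun protect :: "pat \<Rightarrow> pat" where
  "protect (PVar x) = PProt x"
| "protect (PComp p q) = PComp (protect p) (protect q)"
| "protect p = p"

type_synonym subst = "name \<Rightarrow> pat option"

definition is_subst :: "subst \<Rightarrow> bool" where
  "is_subst \<sigma> \<longleftrightarrow> finite (dom \<sigma>) \<and> (\<forall>q\<in>ran \<sigma>. communicable q)"

fun psubst :: "subst \<Rightarrow> pat \<Rightarrow> pat" where
  "psubst \<sigma> (PVar x) = (case \<sigma> x of Some q \<Rightarrow> q | None \<Rightarrow> PVar x)"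
| "psubst \<sigma> (PProt x) = (case \<sigma> x of Some q \<Rightarrow> protect q | None \<Rightarrow> PProt x)"
| "psubst \<sigma> (PBind x) = PBind x"
| "psubst \<sigma> (PComp p q) = PComp (psubst \<sigma> p) (psubst \<sigma> q)"

definition munion :: "subst \<Rightarrow> subst \<Rightarrow> subst option" where
  "munion s1 s2 = (if (\<forall>x \<in> dom s1 \<inter> dom s2. s1 x = s2 x) then Some (s1 ++ s2) else None)"

fun unify :: "pat \<Rightarrow> pat \<Rightarrow> (subst \<times> subst) option" where
  "unify (PVar x) (PVar y) = (if x = y then Some (Map.empty, Map.empty) else None)"
| "unify (PVar x) (PProt y) = (if x = y then Some (Map.empty, Map.empty) else None)"
| "unify (PProt x) (PVar y) = (if x = y then Some (Map.empty, Map.empty) else None)"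
| "unify (PProt x) (PProt y) = (if x = y then Some (Map.empty, Map.empty) else None)"
| "unify (PBind x) q = (if communicable q then Some ([x \<mapsto> q], Map.empty) else None)"
| "unify p (PBind x) = (if communicable p then Some (Map.empty, [x \<mapsto> p]) else None)"
| "unify (PComp p1 p2) (PComp q1 q2) =
     (case (unify p1 q1, unify p2 q2) of
        (Some (s1, r1), Some (s2, r2)) \<Rightarrow>
          (case (munion s1 s2, munion r1 r2) of
             (Some s, Some r) \<Rightarrow> Some (s, r)
           | _ \<Rightarrow> None)
      | _ \<Rightarrow> None)"
| "unify _ _ = None"

datatype proc = PZero | PPar proc proc | PRep proc | PNew name proc | PCase pat proc

fun fn :: "proc \<Rightarrow> name set" where
  "fn PZero = {}"
| "fn (PPar P Q) = fn P \<union> fn Q"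
| "fn (PRep P) = fn P"
| "fn (PNew x P) = fn P - {x}"
| "fn (PCase p P) = fnp p \<union> (fn P - bn p)"

fun bnames :: "proc \<Rightarrow> name set" where
  "bnames PZero = {}"
| "bnames (PPar P Q) = bnames P \<union> bnames Q"
| "bnames (PRep P) = bnames P"
| "bnames (PNew x P) = insert x (bnames P)"
| "bnames (PCase p P) = bn p \<union> bnames P"

fun wf_proc :: "proc \<Rightarrow> bool" where
  "wf_proc PZero = True"
| "wf_proc (PPar P Q) = (wf_proc P \<and> wf_proc Q)"
| "wf_proc (PRep P) = wf_proc P"
| "wf_proc (PNew x P) = wf_proc P"
| "wf_proc (PCase p P) = (wf_pat p \<and> wf_proc P)"

definition swapn :: "name \<Rightarrow> name \<Rightarrow> name \<Rightarrow> name" where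
  "swapn a b z = (if z = a then b else if z = b then a else z)"

fun swapp :: "name \<Rightarrow> name \<Rightarrow> pat \<Rightarrow> pat" where
  "swapp a b (PBind x) = PBind (swapn a b x)"
| "swapp a b (PVar x) = PVar (swapn a b x)"
| "swapp a b (PProt x) = PProt (swapn a b x)"
| "swapp a b (PComp p q) = PComp (swapp a b p) (swapp a b q)"

fun swap :: "name \<Rightarrow> name \<Rightarrow> proc \<Rightarrow> proc" where
  "swap a b PZero = PZero"
| "swap a b (PPar P Q) = PPar (swap a b P) (swap a b Q)"
| "swap a b (PRep P) = PRep (swap a b P)"
| "swap a b (PNew x P) = PNew (swapn a b x) (swap a b P)"
| "swap a b (PCase p P) = PCase (swapp a b p) (swap a b P)"

inductive alpha :: "proc \<Rightarrow> proc \<Rightarrow> bool" where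
  a_refl: "alpha P P"
| a_sym: "alpha P Q \<Longrightarrow> alpha Q P"
| a_trans: "alpha P Q \<Longrightarrow> alpha Q R \<Longrightarrow> alpha P R"
| a_par: "alpha P P' \<Longrightarrow> alpha Q Q' \<Longrightarrow> alpha (PPar P Q) (PPar P' Q')"
| a_rep: "alpha P P' \<Longrightarrow> alpha (PRep P) (PRep P')"
| a_new: "alpha P P' \<Longrightarrow> alpha (PNew x P) (PNew x P')"
| a_case: "alpha P P' \<Longrightarrow> alpha (PCase p P) (PCase p P')"
| a_new_ren: "y \<notin> fn (PNew x P) \<Longrightarrow> alpha (PNew x P) (PNew y (swap x y P))"
| a_case_ren: "x \<in> bn p \<Longrightarrow> y \<notin> fn (PCase p P) \<Longrightarrow> y \<notin> bn p \<Longrightarrow>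
     alpha (PCase p P) (PCase (swapp x y p) (swap x y P))"

text \<open>Naive substitution; it is capture avoiding when no bound name of the process
  lies in the domain of the substitution or occurs in its range.\<close>
fun nsubst :: "subst \<Rightarrow> proc \<Rightarrow> proc" where
  "nsubst \<sigma> PZero = PZero"
| "nsubst \<sigma> (PPar P Q) = PPar (nsubst \<sigma> P) (nsubst \<sigma> Q)"
| "nsubst \<sigma> (PRep P) = PRep (nsubst \<sigma> P)"
| "nsubst \<sigma> (PNew x P) = PNew x (nsubst \<sigma> P)"
| "nsubst \<sigma> (PCase p P) = PCase (psubst \<sigma> p) (nsubst \<sigma> P)"

definition ran_names :: "subst \<Rightarrow> name set" where
  "ran_names \<sigma> = (\<Union>q\<in>ran \<sigma>. fnp q \<union> bn q)"

text \<open>csubst s P Q: Q is (a representative, up to alpha, of) the capture-avoiding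
  application of s to P.\<close>
definition csubst :: "subst \<Rightarrow> proc \<Rightarrow> proc \<Rightarrow> bool" where
  "csubst \<sigma> P Q \<longleftrightarrow> (\<exists>P0. alpha P P0 \<and> bnames P0 \<inter> (dom \<sigma> \<union> ran_names \<sigma>) = {}
                         \<and> Q = nsubst \<sigma> P0)"

inductive scong :: "proc \<Rightarrow> proc \<Rightarrow> bool" where
  s_alpha: "alpha P Q \<Longrightarrow> scong P Q"
| s_refl: "scong P P"
| s_sym: "scong P Q \<Longrightarrow> scong Q P"
| s_trans: "scong P Q \<Longrightarrow> scong Q R \<Longrightarrow> scong P R"
| s_par: "scong P P' \<Longrightarrow> scong Q Q' \<Longrightarrow> scong (PPar P Q) (PPar P' Q')"
| s_rep: "scong P P' \<Longrightarrow> scong (PRep P) (PRep P')"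
| s_new: "scong P P' \<Longrightarrow> scong (PNew x P) (PNew x P')"
| s_case: "scong P P' \<Longrightarrow> scong (PCase p P) (PCase p P')"
| s_par_zero: "scong (PPar P PZero) P"
| s_par_comm: "scong (PPar P Q) (PPar Q P)"
| s_par_assoc: "scong (PPar P (PPar Q R)) (PPar (PPar P Q) R)"
| s_new_zero: "scong (PNew n PZero) PZero"
| s_new_comm: "scong (PNew n (PNew m P)) (PNew m (PNew n P))"
| s_rep_unf: "scong (PRep P) (PPar P (PRep P))"
| s_extr: "n \<notin> fn P \<Longrightarrow> scong (PPar P (PNew n Q)) (PNew n (PPar P Q))"

definition scong_rel :: "(proc \<times> proc) set" where
  "scong_rel = {(P, Q). scong P Q}"

datatype lab = Tau | Lab "name list" pat   \<comment> \<open>Lab ns p  is  (nu ns) p\<close>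

fun lnames :: "lab \<Rightarrow> name set" where
  "lnames Tau = {}"
| "lnames (Lab ns p) = set ns \<union> fnp p \<union> bn p"

fun News :: "name list \<Rightarrow> proc \<Rightarrow> proc" where
  "News [] P = P"
| "News (n # ns) P = PNew n (News ns P)"

inductive ltr :: "proc \<Rightarrow> lab \<Rightarrow> proc \<Rightarrow> bool" where
  t_case: "ltr (PCase p P) (Lab [] p) P"
| t_resnon: "ltr P \<mu> P' \<Longrightarrow> n \<notin> lnames \<mu> \<Longrightarrow> ltr (PNew n P) \<mu> (PNew n P')"
| t_open: "ltr P (Lab ns p) P' \<Longrightarrow> m \<in> vn p - (set ns \<union> pn p \<union> bn p) \<Longrightarrow>
     ltr (PNew m P) (Lab (ns @ [m]) p) P'"
| t_unify: "ltr P (Lab ms p) P' \<Longrightarrow> ltr Q (Lab ns q) Q' \<Longrightarrow>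
     unify p q = Some (\<sigma>, \<rho>) \<Longrightarrow>
     set ms \<inter> fn Q = {} \<Longrightarrow> set ns \<inter> fn P = {} \<Longrightarrow> set ms \<inter> set ns = {} \<Longrightarrow>
     csubst \<sigma> P' P'' \<Longrightarrow> csubst \<rho> Q' Q'' \<Longrightarrow>
     ltr (PPar P Q) Tau (News (ms @ ns) (PPar P'' Q''))"
| t_parint_l: "ltr P Tau P' \<Longrightarrow> ltr (PPar P Q) Tau (PPar P' Q)"
| t_parint_r: "ltr Q Tau Q' \<Longrightarrow> ltr (PPar P Q) Tau (PPar P Q')"
| t_parext_l: "ltr P (Lab ns p) P' \<Longrightarrow> (set ns \<union> bn p) \<inter> fn Q = {} \<Longrightarrow>
     ltr (PPar P Q) (Lab ns p) (PPar P' Q)"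
| t_parext_r: "ltr Q (Lab ns p) Q' \<Longrightarrow> (set ns \<union> bn p) \<inter> fn P = {} \<Longrightarrow>
     ltr (PPar P Q) (Lab ns p) (PPar P Q')"
| t_rep: "ltr (PPar (PRep P) P) \<mu> P' \<Longrightarrow> ltr (PRep P) \<mu> P'"
| t_alpha: "alpha P Q \<Longrightarrow> ltr Q \<mu> Q' \<Longrightarrow> alpha Q' P' \<Longrightarrow> ltr P \<mu> P'"

end

theory Submission
  imports Defs
begin

text \<open>Every residual of a well-formed process \<open>P\<close> under a label \<open>\<mu>\<close> is structurally congruent
to a process whose size is bounded in terms of \<open>P\<close> alone and whose free names lie among those of
\<open>P\<close> and \<open>\<mu>\<close>; up to \<open>\<alpha>\<close>-conversion there are only finitely many such processes, since their
bound names can be drawn from a fixed finite pool.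

Restriction, case
and the parallel rules add a bounded amount; unification replaces names by communicable
patterns, which multiplies the size by at most the largest pattern of \<open>P\<close>. For replication,
a residual of \<open>!P | P\<close> need not be small, but it is congruent to \<open>D | !P\<close> with \<open>D\<close> small, because
\<open>!P\<close> absorbs parallel copies of \<open>P\<close>; this stronger invariant is carried along for processes of
the form \<open>!T | T | \<dots> | T\<close>. Substitution being defined only up to \<open>\<alpha>\<close>-conversion, one also needs
that capture-avoiding substitution is well defined and respects structural congruence.\<close>

section \<open>Renaming and size of processes\<close>

fun map_pat :: "(name \<Rightarrow> name) \<Rightarrow> pat \<Rightarrow> pat" where
  "map_pat f (PBind x) = PBind (f x)"
| "map_pat f (PVar x) = PVar (f x)"
| "map_pat f (PProt x) = PProt (f x)"
| "map_pat f (PComp p q) = PComp (map_pat f p) (map_pat f q)"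

fun map_proc :: "(name \<Rightarrow> name) \<Rightarrow> proc \<Rightarrow> proc" where
  "map_proc f PZero = PZero"
| "map_proc f (PPar P Q) = PPar (map_proc f P) (map_proc f Q)"
| "map_proc f (PRep P) = PRep (map_proc f P)"
| "map_proc f (PNew x P) = PNew (f x) (map_proc f P)"
| "map_proc f (PCase p P) = PCase (map_pat f p) (map_proc f P)"

fun pat_size :: "pat \<Rightarrow> nat" where
  "pat_size (PComp p q) = pat_size p + pat_size q + 1"
| "pat_size _ = 1"

fun proc_size :: "proc \<Rightarrow> nat" where
  "proc_size PZero = 1"
| "proc_size (PPar P Q) = proc_size P + proc_size Q + 1"
| "proc_size (PRep P) = proc_size P + 1"
| "proc_size (PNew x P) = proc_size P + 1"
| "proc_size (PCase p P) = pat_size p + proc_size P + 1"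

text \<open>A replication weighs more than two copies of its body because a \<open>\<tau>\<close>-step of \<open>!P\<close> may
  involve two of them.\<close>

fun weight :: "proc \<Rightarrow> nat" where
  "weight PZero = 1"
| "weight (PPar P Q) = weight P + weight Q + 1"
| "weight (PRep P) = 3 * weight P + 3"
| "weight (PNew x P) = weight P + 1"
| "weight (PCase p P) = pat_size p + weight P + 1"

fun max_pat_size :: "proc \<Rightarrow> nat" where
  "max_pat_size PZero = 1"
| "max_pat_size (PPar P Q) = max (max_pat_size P) (max_pat_size Q)"
| "max_pat_size (PRep P) = max_pat_size P"
| "max_pat_size (PNew x P) = max_pat_size P"
| "max_pat_size (PCase p P) = max (pat_size p) (max_pat_size P)"

fun pat_names :: "pat \<Rightarrow> name set" where
  "pat_names (PBind x) = {x}"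
| "pat_names (PVar x) = {x}"
| "pat_names (PProt x) = {x}"
| "pat_names (PComp p q) = pat_names p \<union> pat_names q"

fun all_names :: "proc \<Rightarrow> name set" where
  "all_names PZero = {}"
| "all_names (PPar P Q) = all_names P \<union> all_names Q"
| "all_names (PRep P) = all_names P"
| "all_names (PNew x P) = insert x (all_names P)"
| "all_names (PCase p P) = pat_names p \<union> all_names P"

lemma pat_size_pos[simp]: "pat_size p \<ge> 1" by (cases p) auto
lemma proc_size_pos[simp]: "proc_size P \<ge> 1" by (cases P) auto
lemma weight_pos[simp]: "weight P \<ge> 1" by (cases P) auto
lemma max_pat_size_pos[simp]: "max_pat_size P \<ge> 1" by (induct P) auto
lemma proc_size_le_weight: "proc_size P \<le> weight P" by (induct P) auto

lemma swapn_swapn[simp]: "swapn a b (swapn a b z) = z" by (simp add: swapn_def)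
lemma swapn_simps[simp]: "swapn a b a = b" "swapn a b b = a"
  "z \<noteq> a \<Longrightarrow> z \<noteq> b \<Longrightarrow> swapn a b z = z" by (auto simp: swapn_def)
lemma bij_swapn[simp]: "bij (swapn a b)" by (metis bijI' swapn_swapn)
lemma inj_swapn[simp]: "inj (swapn a b)" by (metis injI swapn_swapn)
lemma swapp_eq_map_pat: "swapp a b p = map_pat (swapn a b) p" by (induct p) auto
lemma swap_eq_map_proc: "swap a b P = map_proc (swapn a b) P" by (induct P) (auto simp: swapp_eq_map_pat)

lemma map_pat_comp[simp]: "map_pat f (map_pat g p) = map_pat (f \<circ> g) p" by (induct p) auto
lemma map_proc_comp[simp]: "map_proc f (map_proc g P) = map_proc (f \<circ> g) P" by (induct P) (auto simp: comp_def)
lemma map_pat_id[simp]: "map_pat id p = p" by (induct p) auto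
lemma map_pat_id'[simp]: "map_pat (\<lambda>x. x) p = p" by (induct p) auto
lemma map_proc_id[simp]: "map_proc id P = P" by (induct P) (auto simp: id_def)
lemma map_proc_id'[simp]: "map_proc (\<lambda>x. x) P = P" by (induct P) (auto simp: id_def[symmetric])
lemma map_pat_cong: "(\<And>z. z \<in> pat_names p \<Longrightarrow> f z = g z) \<Longrightarrow> map_pat f p = map_pat g p"
  by (induct p) auto
lemma map_proc_cong: "(\<And>z. z \<in> all_names P \<Longrightarrow> f z = g z) \<Longrightarrow> map_proc f P = map_proc g P"
  by (induct P) (auto intro: map_pat_cong)
lemma map_pat_ident: "(\<And>z. z \<in> pat_names p \<Longrightarrow> f z = z) \<Longrightarrow> map_pat f p = p"
  using map_pat_cong[of p f id] by simp
lemma bn_list_map_pat[simp]: "bn_list (map_pat f p) = map f (bn_list p)" by (induct p) auto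
lemma bn_map_pat[simp]: "bn (map_pat f p) = f ` bn p" by (simp add: bn_def)
lemma vn_map_pat[simp]: "vn (map_pat f p) = f ` vn p" by (induct p) auto
lemma pn_map_pat[simp]: "pn (map_pat f p) = f ` pn p" by (induct p) auto
lemma fnp_map_pat[simp]: "fnp (map_pat f p) = f ` fnp p" by (auto simp: fnp_def image_Un)
lemma pat_names_map_pat[simp]: "pat_names (map_pat f p) = f ` pat_names p" by (induct p) auto
lemma pat_size_map_pat[simp]: "pat_size (map_pat f p) = pat_size p" by (induct p) auto
lemma bn_simps[simp]: "bn (PBind x) = {x}" "bn (PVar x) = {}" "bn (PProt x) = {}"
  "bn (PComp p q) = bn p \<union> bn q" by (auto simp: bn_def)
lemma fnp_simps[simp]: "fnp (PBind x) = {}" "fnp (PVar x) = {x}" "fnp (PProt x) = {x}"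
  "fnp (PComp p q) = fnp p \<union> fnp q" by (auto simp: fnp_def)
lemma pat_names_eq: "pat_names p = bn p \<union> fnp p" by (induct p) auto
lemma finite_pat_names[simp]: "finite (pat_names p)" by (induct p) auto
lemma finite_all_names[simp]: "finite (all_names P)" by (induct P) auto

lemma wf_pat_map_pat[simp]: "inj f \<Longrightarrow> wf_pat (map_pat f p) = wf_pat p"
proof -
  assume f: "inj f"
  have "distinct (map f (bn_list p)) = distinct (bn_list p)"
    using f by (simp add: distinct_map inj_on_subset[of f UNIV])
  moreover have "f ` bn p \<inter> f ` fnp p = f ` (bn p \<inter> fnp p)" using f by (simp add: image_Int)
  ultimately show ?thesis using f unfolding wf_pat_def
    by (simp add: bn_def)
qed

lemma fn_map_proc[simp]: "inj f \<Longrightarrow> fn (map_proc f P) = f ` fn P"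
  by (induct P) (auto simp: image_Un image_set_diff)
lemma bnames_map_proc[simp]: "bnames (map_proc f P) = f ` bnames P" by (induct P) auto
lemma all_names_map_proc[simp]: "all_names (map_proc f P) = f ` all_names P" by (induct P) auto
lemma proc_size_map_proc[simp]: "proc_size (map_proc f P) = proc_size P" by (induct P) auto
lemma weight_map_proc[simp]: "weight (map_proc f P) = weight P" by (induct P) auto
lemma max_pat_size_map_proc[simp]: "max_pat_size (map_proc f P) = max_pat_size P" by (induct P) auto
lemma wf_map_proc[simp]: "inj f \<Longrightarrow> wf_proc (map_proc f P) = wf_proc P" by (induct P) auto

lemma fn_subset_all_names: "fn P \<subseteq> all_names P" by (induct P) (auto simp: pat_names_eq)
lemma bnames_subset_all_names: "bnames P \<subseteq> all_names P" by (induct P) (auto simp: pat_names_eq)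
lemma all_names_subset: "all_names P \<subseteq> fn P \<union> bnames P" by (induct P) (auto simp: pat_names_eq)
lemma finite_fn[simp]: "finite (fn P)" by (rule finite_subset[OF fn_subset_all_names]) simp
lemma finite_bnames[simp]: "finite (bnames P)" by (rule finite_subset[OF bnames_subset_all_names]) simp

lemma swapn_comp_inj: "inj f \<Longrightarrow> f \<circ> swapn x y = swapn (f x) (f y) \<circ> f"
  by (auto simp: fun_eq_iff swapn_def inj_eq)

lemma map_proc_swap: "inj f \<Longrightarrow> map_proc f (swap x y P) = swap (f x) (f y) (map_proc f P)"
  by (simp add: swap_eq_map_proc swapn_comp_inj)
lemma map_pat_swapp: "inj f \<Longrightarrow> map_pat f (swapp x y p) = swapp (f x) (f y) (map_pat f p)"
  by (simp add: swapp_eq_map_pat swapn_comp_inj)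

section \<open>Alpha-equivalence\<close>

lemma alpha_map_proc: "alpha P Q \<Longrightarrow> inj f \<Longrightarrow> alpha (map_proc f P) (map_proc f Q)"
proof (induct rule: alpha.induct)
  case (a_new_ren y x P)
  have "f y \<notin> fn (PNew (f x) (map_proc f P))" using a_new_ren by (auto simp: inj_eq)
  hence "alpha (PNew (f x) (map_proc f P)) (PNew (f y) (swap (f x) (f y) (map_proc f P)))"
    by (rule alpha.a_new_ren)
  thus ?case using a_new_ren by (simp add: map_proc_swap)
next
  case (a_case_ren x p y P)
  have "f x \<in> bn (map_pat f p)" using a_case_ren by auto
  moreover have "f y \<notin> fn (PCase (map_pat f p) (map_proc f P))"
    using a_case_ren by (auto simp: inj_eq)
  moreover have "f y \<notin> bn (map_pat f p)" using a_case_ren by (auto simp: inj_eq)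
  ultimately have "alpha (PCase (map_pat f p) (map_proc f P))
      (PCase (swapp (f x) (f y) (map_pat f p)) (swap (f x) (f y) (map_proc f P)))"
    by (rule alpha.a_case_ren)
  thus ?case using a_case_ren by (simp add: map_proc_swap map_pat_swapp)
qed (auto intro: alpha.intros)

lemma alpha_sizes: "alpha P Q \<Longrightarrow> proc_size P = proc_size Q \<and> weight P = weight Q \<and> max_pat_size P = max_pat_size Q"
  by (induct rule: alpha.induct) (auto simp: swap_eq_map_proc swapp_eq_map_pat)

lemma alpha_wf: "alpha P Q \<Longrightarrow> wf_proc P = wf_proc Q"
  by (induct rule: alpha.induct) (auto simp: swap_eq_map_proc swapp_eq_map_pat)

lemma swapn_image_fix: "a \<notin> S \<Longrightarrow> b \<notin> S \<Longrightarrow> swapn a b ` S = S"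
  by (auto simp: swapn_def image_iff)

lemma alpha_fn: "alpha P Q \<Longrightarrow> wf_proc P \<Longrightarrow> fn P = fn Q"
proof (induct rule: alpha.induct)
  case (a_sym P Q) thus ?case using alpha_wf by auto
next
  case (a_trans P Q R) thus ?case using alpha_wf by auto
next
  case (a_new_ren y x P)
  have "fn (PNew y (swap x y P)) = swapn x y ` fn (PNew x P)"
    by (simp add: swap_eq_map_proc image_set_diff)
  also have "\<dots> = fn (PNew x P)" using a_new_ren by (intro swapn_image_fix) auto
  finally show ?case by simp
next
  case (a_case_ren x p y P)
  have "x \<notin> fn (PCase p P)" using a_case_ren by (auto simp: wf_pat_def)
  have "fn (PCase (swapp x y p) (swap x y P)) = swapn x y ` fn (PCase p P)"
    by (simp add: swap_eq_map_proc swapp_eq_map_pat image_set_diff image_Un)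
  also have "\<dots> = fn (PCase p P)" using a_case_ren \<open>x \<notin> fn (PCase p P)\<close>
    by (intro swapn_image_fix) auto
  finally show ?case by simp
qed auto

fun swaps :: "(name \<times> name) list \<Rightarrow> name \<Rightarrow> name" where
  "swaps [] = id"
| "swaps ((a,c)#xs) = swapn a c \<circ> swaps xs"

lemma bij_swaps[simp]: "bij (swaps xs)"
proof (induct xs rule: swaps.induct)
  case 1 show ?case by (simp only: swaps.simps bij_id)
next
  case (2 a c xs) thus ?case by (simp only: swaps.simps) (rule bij_comp, simp_all)
qed
lemma inj_swaps[simp]: "inj (swaps xs)" using bij_swaps bij_is_inj by blast

lemma swaps_other: "z \<notin> fst ` set xs \<Longrightarrow> z \<notin> snd ` set xs \<Longrightarrow> swaps xs z = z"
  by (induct xs rule: swaps.induct) (auto simp: swapn_def)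

lemma swaps_pair: "distinct (map fst xs @ map snd xs) \<Longrightarrow> (a,c) \<in> set xs \<Longrightarrow> swaps xs a = c"
proof (induct xs rule: swaps.induct)
  case 1 thus ?case by simp
next
  case (2 b d xs)
  show ?case
  proof (cases "(a,c) = (b,d)")
    case True
    hence "swaps xs b = b" using 2 by (intro swaps_other) (auto simp: image_iff)
    thus ?thesis using True by simp
  next
    case False
    hence "(a,c) \<in> set xs" using 2 by auto
    hence "swaps xs a = c" using 2 by auto
    moreover have "c \<noteq> b" "c \<noteq> d" using 2 \<open>(a,c) \<in> set xs\<close> by (auto simp: image_iff)
    ultimately show ?thesis by simp
  qed
qed

lemma fresh_name: "finite S \<Longrightarrow> \<exists>c::name. c \<notin> S"
  using ex_new_if_finite[OF infinite_UNIV_nat] by auto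

lemma fresh_list: "finite S \<Longrightarrow> \<exists>cs::name list. length cs = n \<and> distinct cs \<and> set cs \<inter> S = {}"
proof -
  assume "finite S"
  hence "infinite (UNIV - S)" using infinite_UNIV_nat Diff_infinite_finite by blast
  then obtain T where T: "T \<subseteq> UNIV - S" "finite T" "card T = n"
    using infinite_arbitrarily_large by blast
  show ?thesis
    by (rule exI[of _ "sorted_list_of_set T"]) (use T in auto)
qed

lemma alpha_case_swaps:
  assumes "distinct (map fst xs @ map snd xs)" "fst ` set xs \<subseteq> bn p"
    "snd ` set xs \<inter> all_names (PCase p A) = {}"
  shows "alpha (PCase p A) (PCase (map_pat (swaps xs) p) (map_proc (swaps xs) A))"
  using assms
proof (induct xs rule: swaps.induct)
  case 1 thus ?case by (simp add: alpha.a_refl)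
next
  case (2 b c xs)
  let ?p = "map_pat (swaps xs) p" and ?A = "map_proc (swaps xs) A"
  have IH: "alpha (PCase p A) (PCase ?p ?A)" using 2 by auto
  have bfix: "swaps xs b = b" using 2 by (intro swaps_other) (auto simp: image_iff)
  have cfix: "swaps xs c = c" using 2 by (intro swaps_other) (auto simp: image_iff)
  have "b \<in> bn ?p" using 2 bfix by (force simp: image_iff)
  moreover have "c \<notin> fn (PCase ?p ?A)"
  proof
    assume "c \<in> fn (PCase ?p ?A)"
    hence "c \<in> swaps xs ` fn (PCase p A)" by (simp add: image_Un image_set_diff)
    then obtain w where "w \<in> fn (PCase p A)" "swaps xs w = c" by auto
    hence "w = c" using cfix by (metis inj_eq inj_swaps)
    thus False using \<open>w \<in> fn (PCase p A)\<close> 2(4) fn_subset_all_names[of "PCase p A"] by auto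
  qed
  moreover have "c \<notin> bn ?p"
  proof
    assume "c \<in> bn ?p"
    then obtain w where "w \<in> bn p" "swaps xs w = c" by auto
    hence "w = c" using cfix by (metis inj_eq inj_swaps)
    thus False using \<open>w \<in> bn p\<close> 2(4) by (auto simp: pat_names_eq)
  qed
  ultimately have "alpha (PCase ?p ?A) (PCase (swapp b c ?p) (swap b c ?A))"
    by (rule alpha.a_case_ren)
  thus ?case using IH by (simp only: swap_eq_map_proc swapp_eq_map_pat map_pat_comp map_proc_comp swaps.simps)
      (rule alpha.a_trans)
qed

lemma swaps_image_fst: "distinct (map fst xs @ map snd xs) \<Longrightarrow> swaps xs ` (fst ` set xs) = snd ` set xs"
proof -
  assume d: "distinct (map fst xs @ map snd xs)"
  have "swaps xs ` (fst ` set xs) = (\<lambda>(a,c). swaps xs a) ` set xs" by (auto simp: image_iff; force)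
  also have "\<dots> = (\<lambda>(a,c). c) ` set xs" using swaps_pair[OF d] by (auto intro!: image_cong)
  also have "\<dots> = snd ` set xs" by (simp add: split_def)
  finally show ?thesis .
qed

lemma case_rename_swaps:
  assumes f: "inj f" and wfp: "wf_pat p" and fx: "\<forall>z\<in>fn (PCase p A). f z = z"
    and cs: "length cs = length (bn_list p)" "distinct cs"
      "set cs \<inter> (all_names (PCase p A) \<union> f ` all_names (PCase p A)) = {}"
  defines "t1 \<equiv> swaps (zip (bn_list p) cs)" and "t2 \<equiv> swaps (zip (map f (bn_list p)) cs)"
  shows "map_pat t1 p = map_pat t2 (map_pat f p)"
    and "alpha (PCase p A) (PCase (map_pat t1 p) (map_proc t1 A))"
    and "alpha (PCase (map_pat f p) (map_proc f A)) (PCase (map_pat t2 (map_pat f p)) (map_proc t2 (map_proc f A)))"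
    and "\<forall>z\<in>bn p \<union> fn (PCase p A). t2 (f z) = t1 z"
    and "\<forall>z. z \<notin> bn p \<union> set cs \<longrightarrow> t1 z = z"
    and "\<forall>z. z \<notin> f ` bn p \<union> set cs \<longrightarrow> t2 z = z"
    and "bn (map_pat t1 p) = set cs"
proof -
  define X where "X = PCase p A"
  define bs where "bs = bn_list p"
  define xs1 where "xs1 = zip bs cs"
  define xs2 where "xs2 = zip (map f bs) cs"
  have t1: "t1 = swaps xs1" by (simp add: t1_def xs1_def bs_def)
  have t2: "t2 = swaps xs2" by (simp add: t2_def xs2_def bs_def)
  have cs': "length cs = length bs" "distinct cs" "set cs \<inter> (all_names X \<union> f ` all_names X) = {}"
    using cs by (auto simp: bs_def X_def)
  have dbs: "distinct bs" using wfp by (simp add: wf_pat_def bs_def)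
  have bsX: "set bs \<subseteq> all_names X" by (simp add: bs_def X_def bn_def[symmetric] pat_names_eq) blast
  have m1: "map fst xs1 = bs" "map snd xs1 = cs" using cs' by (auto simp: xs1_def)
  have m2: "map fst xs2 = map f bs" "map snd xs2 = cs" using cs' by (auto simp: xs2_def)
  have f1: "fst ` set xs1 = set bs" "snd ` set xs1 = set cs" by (metis list.set_map m1)+
  have f2: "fst ` set xs2 = f ` set bs" "snd ` set xs2 = set cs" by (metis list.set_map m2 list.set_map)+
  have d1: "distinct (map fst xs1 @ map snd xs1)" using m1 dbs cs' bsX by auto
  have d2: "distinct (map fst xs2 @ map snd xs2)" using m2 dbs cs' bsX f
    by (auto simp: distinct_map inj_on_subset[of f UNIV])
  show key: "\<forall>z\<in>bn p \<union> fn (PCase p A). t2 (f z) = t1 z"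
  proof
    fix z assume z: "z \<in> bn p \<union> fn (PCase p A)"
    show "t2 (f z) = t1 z"
    proof (cases "z \<in> bn p")
      case True
      then obtain i where i: "i < length bs" "bs ! i = z"
        by (metis in_set_conv_nth bs_def bn_def)
      have "(z, cs ! i) \<in> set xs1"
        using i cs' nth_mem[of i "zip bs cs"] by (simp add: xs1_def)
      hence "t1 z = cs ! i" unfolding t1 using d1 by (rule swaps_pair[rotated])
      moreover have "(f z, cs ! i) \<in> set xs2"
        using i cs' nth_mem[of i "zip (map f bs) cs"] by (simp add: xs2_def)
      hence "t2 (f z) = cs ! i" unfolding t2 using d2 by (rule swaps_pair[rotated])
      ultimately show ?thesis by simp
    next
      case False
      hence zX: "z \<in> fn X" using z by (auto simp: X_def)
      hence fz: "f z = z" using fx by (auto simp: X_def)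
      have "z \<notin> set bs" using False by (simp add: bs_def bn_def)
      have "z \<notin> set cs" using cs' zX fn_subset_all_names by auto
      hence "t1 z = z" unfolding t1 using \<open>z \<notin> set bs\<close> f1 by (intro swaps_other) auto
      moreover have "z \<notin> f ` set bs" using fz f \<open>z \<notin> set bs\<close> by (auto simp: inj_eq)
      hence "t2 z = z" unfolding t2 using \<open>z \<notin> set cs\<close> f2 by (intro swaps_other) auto
      ultimately show ?thesis using fz by simp
    qed
  qed
  show "\<forall>z. z \<notin> bn p \<union> set cs \<longrightarrow> t1 z = z"
    unfolding t1 using f1 by (auto intro!: swaps_other simp: bs_def bn_def)
  show "\<forall>z. z \<notin> f ` bn p \<union> set cs \<longrightarrow> t2 z = z"
    unfolding t2 using f2 by (auto intro!: swaps_other simp: bs_def bn_def)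
  show "bn (map_pat t1 p) = set cs"
    using swaps_image_fst[OF d1] f1 by (simp add: t1 bs_def bn_def)
  have "fst ` set xs1 \<subseteq> bn p" "snd ` set xs1 \<inter> all_names (PCase p A) = {}"
    using f1 cs' by (auto simp: bs_def bn_def X_def)
  with d1 show "alpha (PCase p A) (PCase (map_pat t1 p) (map_proc t1 A))"
    using alpha_case_swaps t1 by simp
  have "fst ` set xs2 \<subseteq> bn (map_pat f p)" "snd ` set xs2 \<inter> all_names (PCase (map_pat f p) (map_proc f A)) = {}"
    using f2 cs' by (auto simp: bs_def bn_def X_def)
  with d2 show "alpha (PCase (map_pat f p) (map_proc f A)) (PCase (map_pat t2 (map_pat f p)) (map_proc t2 (map_proc f A)))"
    using alpha_case_swaps[of xs2 "map_pat f p" "map_proc f A"] t2 by simp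
  show "map_pat t1 p = map_pat t2 (map_pat f p)"
    using key by (simp, intro map_pat_cong) (auto simp: pat_names_eq)
qed

lemma alpha_body_rename:
  assumes t1: "bij t1" and key: "\<forall>z\<in>fn A. t2 (f z) = t1 z"
    and h: "alpha A (map_proc (inv t1 \<circ> t2 \<circ> f) A)"
  shows "alpha (map_proc t1 A) (map_proc t2 (map_proc f A))"
proof -
  have "alpha (map_proc t1 A) (map_proc t1 (map_proc (inv t1 \<circ> t2 \<circ> f) A))"
    using alpha_map_proc[OF h] t1 by (simp add: bij_is_inj)
  moreover have "t1 \<circ> (inv t1 \<circ> t2 \<circ> f) = t2 \<circ> f"
    using t1 by (simp add: fun_eq_iff bij_is_surj surj_f_inv_f)
  ultimately show ?thesis by simp
qed

lemma alpha_map_proc_fixing_fn: "inj f \<Longrightarrow> wf_proc X \<Longrightarrow> (\<forall>z\<in>fn X. f z = z) \<Longrightarrow> alpha X (map_proc f X)"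
proof (induct "proc_size X" arbitrary: X f rule: less_induct)
  case (less X f)
  show ?case
  proof (cases X)
    case PZero thus ?thesis by (simp add: alpha.a_refl)
  next
    case (PPar P Q)
    have "alpha P (map_proc f P)" using less PPar by (intro less(1)) auto
    moreover have "alpha Q (map_proc f Q)" using less PPar by (intro less(1)) auto
    ultimately show ?thesis using PPar by (simp add: alpha.a_par)
  next
    case (PRep P)
    have "alpha P (map_proc f P)" using less PRep by (intro less(1)) auto
    thus ?thesis using PRep by (simp add: alpha.a_rep)
  next
    case (PNew n A)
    obtain c where c: "c \<notin> all_names A \<union> {n, f n} \<union> f ` all_names A"
      using fresh_name[of "all_names A \<union> {n, f n} \<union> f ` all_names A"] by auto
    have cA: "c \<notin> fn A" using c fn_subset_all_names by auto
    define \<rho> where "\<rho> = swapn (f n) c \<circ> f \<circ> swapn n c"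
    have fixr: "\<forall>w\<in>fn (swap n c A). \<rho> w = w"
    proof
      fix w assume "w \<in> fn (swap n c A)"
      then obtain z where z: "z \<in> fn A" "w = swapn n c z" by (auto simp: swap_eq_map_proc)
      show "\<rho> w = w"
      proof (cases "z = n")
        case False
        have "f z = z" using less(4) PNew z False by auto
        moreover have "z \<noteq> c" using z cA by auto
        moreover have "z \<noteq> f n" using \<open>f z = z\<close> False less(2) by (metis inj_eq)
        ultimately show ?thesis using z False by (simp add: \<rho>_def swapn_def)
      qed (use z in \<open>simp add: \<rho>_def\<close>)
    qed
    have "alpha (swap n c A) (map_proc \<rho> (swap n c A))"
      using less PNew fixr by (intro less(1)) (auto simp: swap_eq_map_proc \<rho>_def inj_compose)
    moreover have "\<rho> \<circ> swapn n c = swapn (f n) c \<circ> f" by (auto simp: \<rho>_def fun_eq_iff)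
    ultimately have "alpha (PNew c (swap n c A)) (PNew c (swap (f n) c (map_proc f A)))"
      by (simp add: swap_eq_map_proc alpha.a_new)
    moreover have "alpha (PNew n A) (PNew c (swap n c A))"
      by (rule alpha.a_new_ren) (use cA in auto)
    moreover have "alpha (PNew (f n) (map_proc f A)) (PNew c (swap (f n) c (map_proc f A)))"
      by (rule alpha.a_new_ren) (use c less(2) fn_subset_all_names in auto)
    ultimately show ?thesis using PNew by (metis alpha.a_sym alpha.a_trans map_proc.simps(4))
  next
    case (PCase p A)
    have wfp: "wf_pat p" and wfA: "wf_proc A" using less PCase by auto
    obtain cs where cs: "length cs = length (bn_list p)" "distinct cs"
      "set cs \<inter> (all_names X \<union> f ` all_names X) = {}"
      using fresh_list[of "all_names X \<union> f ` all_names X" "length (bn_list p)"] by auto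
    define t1 where "t1 = swaps (zip (bn_list p) cs)"
    define t2 where "t2 = swaps (zip (map f (bn_list p)) cs)"
    have fx: "\<forall>z\<in>fn (PCase p A). f z = z" using less(4) PCase by simp
    have csX: "set cs \<inter> (all_names (PCase p A) \<union> f ` all_names (PCase p A)) = {}" using cs PCase by simp
    note cr = case_rename_swaps[OF less(2) wfp fx cs(1,2) csX, folded t1_def t2_def]
    have bij1: "bij t1" by (simp add: t1_def)
    have "\<forall>z\<in>fn A. t2 (f z) = t1 z" using cr(4) by auto
    moreover have "alpha A (map_proc (inv t1 \<circ> t2 \<circ> f) A)"
    proof (rule less(1))
      show "inj (inv t1 \<circ> t2 \<circ> f)" using less(2) bij1
        by (simp add: inj_compose bij_imp_bij_inv bij_is_inj t2_def)
      show "\<forall>z\<in>fn A. (inv t1 \<circ> t2 \<circ> f) z = z" using \<open>\<forall>z\<in>fn A. t2 (f z) = t1 z\<close> bij1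
        by (simp add: bij_is_inj)
    qed (use PCase wfA in auto)
    ultimately have "alpha (map_proc t1 A) (map_proc t2 (map_proc f A))"
      using alpha_body_rename bij1 by blast
    hence "alpha (PCase (map_pat t1 p) (map_proc t1 A)) (PCase (map_pat t2 (map_pat f p)) (map_proc t2 (map_proc f A)))"
      using cr(1) by (simp add: alpha.a_case)
    thus ?thesis using cr(2,3) PCase by (metis alpha.a_sym alpha.a_trans map_proc.simps(5))
  qed
qed

lemma case_rename_body:
  assumes f: "inj f" and wf: "wf_proc (PCase p A)" and fx: "\<forall>z\<in>fn (PCase p A). f z = z"
    and cs: "length cs = length (bn_list p)" "distinct cs"
      "set cs \<inter> (all_names (PCase p A) \<union> f ` all_names (PCase p A)) = {}"
  defines "t1 \<equiv> swaps (zip (bn_list p) cs)" and "t2 \<equiv> swaps (zip (map f (bn_list p)) cs)"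
  shows "alpha (map_proc t1 A) (map_proc t2 (map_proc f A))"
proof -
  have key: "\<forall>z\<in>fn A. t2 (f z) = t1 z"
    using case_rename_swaps(4)[OF f _ fx cs] wf by (auto simp: t1_def t2_def)
  have bij1: "bij t1" by (simp add: t1_def)
  have "alpha A (map_proc (inv t1 \<circ> t2 \<circ> f) A)"
    using key bij1 f wf by (intro alpha_map_proc_fixing_fn) (auto simp: inj_compose bij_imp_bij_inv bij_is_inj t2_def)
  thus ?thesis using alpha_body_rename bij1 key by blast
qed

lemma alpha_swap_new_body:
  assumes f: "inj f" and wf: "wf_proc A" and fx: "\<forall>z\<in>fn (PNew n A). f z = z"
    and c: "c \<notin> all_names A" "c \<noteq> n" "c \<noteq> f n"
  shows "alpha (swap n c A) (swap (f n) c (map_proc f A))"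
proof -
  have cA: "c \<notin> fn A" using c fn_subset_all_names by auto
  define \<rho> where "\<rho> = swapn (f n) c \<circ> f \<circ> swapn n c"
  have injr: "inj \<rho>" unfolding \<rho>_def using f by (simp add: inj_compose)
  have fixr: "\<forall>w\<in>fn (swap n c A). \<rho> w = w"
  proof
    fix w assume "w \<in> fn (swap n c A)"
    then obtain z where z: "z \<in> fn A" "w = swapn n c z" by (auto simp: swap_eq_map_proc)
    show "\<rho> w = w"
    proof (cases "z = n")
      case True thus ?thesis using z by (simp add: \<rho>_def)
    next
      case False
      have "z \<noteq> c" using z cA by auto
      hence wz: "w = z" using z False by simp
      have fz: "f z = z" using fx z False by auto
      have "z \<noteq> f n" using fz False f by (metis inj_eq)
      thus ?thesis using wz fz \<open>z \<noteq> c\<close> False by (simp add: \<rho>_def)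
    qed
  qed
  have s2: "alpha (swap n c A) (map_proc \<rho> (swap n c A))"
    using wf injr fixr by (intro alpha_map_proc_fixing_fn) (auto simp: swap_eq_map_proc)
  have "\<rho> \<circ> swapn n c = swapn (f n) c \<circ> f" by (auto simp: \<rho>_def fun_eq_iff)
  hence "map_proc \<rho> (swap n c A) = swap (f n) c (map_proc f A)" by (simp add: swap_eq_map_proc)
  thus ?thesis using s2 by simp
qed

text \<open>Inversion principle for \<open>\<alpha>\<close>: equivalent processes share their outermost constructor, and
  under a binder the bodies agree up to a bijective renaming that fixes the free names.\<close>

definition alpha_shape :: "proc \<Rightarrow> proc \<Rightarrow> bool" where
  "alpha_shape X Z = (case X of
    PZero \<Rightarrow> Z = PZero
  | PPar A B \<Rightarrow> (\<exists>A' B'. Z = PPar A' B' \<and> alpha A A' \<and> alpha B B')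
  | PRep A \<Rightarrow> (\<exists>A'. Z = PRep A' \<and> alpha A A')
  | PNew n A \<Rightarrow> (\<exists>f B. bij f \<and> (\<forall>z\<in>fn X. f z = z) \<and> Z = PNew (f n) B \<and> alpha (map_proc f A) B)
  | PCase p A \<Rightarrow> (\<exists>f B. bij f \<and> (\<forall>z\<in>fn X. f z = z) \<and> Z = PCase (map_pat f p) B \<and> alpha (map_proc f A) B))"

lemma alpha_shape_refl: "alpha_shape X X"
  by (cases X) (auto simp: alpha_shape_def alpha.a_refl intro!: exI[of _ id])

lemma inv_fixpoint: "bij f \<Longrightarrow> f z = z \<Longrightarrow> inv f z = z"
  by (metis bij_inv_eq_iff)

lemma alpha_shape_sym: "alpha_shape X Z \<Longrightarrow> alpha X Z \<Longrightarrow> wf_proc X \<Longrightarrow> alpha_shape Z X"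
proof (cases X)
  case (PNew n A)
  assume "alpha_shape X Z" "alpha X Z" "wf_proc X"
  then obtain f B where f: "bij f" "\<forall>z\<in>fn X. f z = z" "Z = PNew (f n) B" "alpha (map_proc f A) B"
    using PNew by (auto simp: alpha_shape_def)
  have fnZ: "fn Z = fn X" using alpha_fn \<open>alpha X Z\<close> \<open>wf_proc X\<close> by auto
  have "alpha (map_proc (inv f) (map_proc f A)) (map_proc (inv f) B)"
    using f(4) by (rule alpha_map_proc) (simp add: bij_is_inj bij_imp_bij_inv f(1))
  hence "alpha (map_proc (inv f) B) A" using f(1) by (simp add: bij_is_inj alpha.a_sym)
  moreover have "inv f (f n) = n" using f(1) by (simp add: bij_is_inj)
  moreover have "\<forall>z\<in>fn Z. inv f z = z" using f(1) f(2) fnZ by (simp add: inv_fixpoint)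
  ultimately show ?thesis using f PNew bij_imp_bij_inv[OF f(1)]
    by (auto simp: alpha_shape_def intro!: exI[of _ "inv f"])
next
  case (PCase p A)
  assume "alpha_shape X Z" "alpha X Z" "wf_proc X"
  then obtain f B where f: "bij f" "\<forall>z\<in>fn X. f z = z" "Z = PCase (map_pat f p) B" "alpha (map_proc f A) B"
    using PCase by (auto simp: alpha_shape_def)
  have fnZ: "fn Z = fn X" using alpha_fn \<open>alpha X Z\<close> \<open>wf_proc X\<close> by auto
  have "alpha (map_proc (inv f) (map_proc f A)) (map_proc (inv f) B)"
    using f(4) by (rule alpha_map_proc) (simp add: bij_is_inj bij_imp_bij_inv f(1))
  hence "alpha (map_proc (inv f) B) A" using f(1) by (simp add: bij_is_inj alpha.a_sym)
  moreover have "map_pat (inv f) (map_pat f p) = p" using f(1) by (simp add: bij_is_inj)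
  moreover have "\<forall>z\<in>fn Z. inv f z = z" using f(1) f(2) fnZ by (simp add: inv_fixpoint)
  ultimately show ?thesis using f PCase bij_imp_bij_inv[OF f(1)]
    by (auto simp: alpha_shape_def intro!: exI[of _ "inv f"])
qed (auto simp: alpha_shape_def intro: alpha.a_sym)

lemma alpha_shape_trans: "alpha_shape X Y \<Longrightarrow> alpha_shape Y Z \<Longrightarrow> alpha X Y \<Longrightarrow> wf_proc X \<Longrightarrow> alpha_shape X Z"
proof (cases X)
  case (PNew n A)
  assume h: "alpha_shape X Y" "alpha_shape Y Z" "alpha X Y" "wf_proc X"
  then obtain f B where f: "bij f" "\<forall>z\<in>fn X. f z = z" "Y = PNew (f n) B" "alpha (map_proc f A) B"
    using PNew by (auto simp: alpha_shape_def)
  then obtain g C where g: "bij g" "\<forall>z\<in>fn Y. g z = z" "Z = PNew (g (f n)) C" "alpha (map_proc g B) C"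
    using h by (auto simp: alpha_shape_def)
  have fnY: "fn Y = fn X" using alpha_fn h by auto
  have "alpha (map_proc (g \<circ> f) A) (map_proc g B)" using alpha_map_proc[OF f(4) bij_is_inj[OF g(1)]] by simp
  hence "alpha (map_proc (g \<circ> f) A) C" using g(4) by (simp add: alpha.a_trans)
  moreover have "bij (g \<circ> f)" using f g by (simp add: bij_comp)
  ultimately show ?thesis using f g fnY PNew by (auto simp: alpha_shape_def intro!: exI[of _ "g \<circ> f"])
next
  case (PCase p A)
  assume h: "alpha_shape X Y" "alpha_shape Y Z" "alpha X Y" "wf_proc X"
  then obtain f B where f: "bij f" "\<forall>z\<in>fn X. f z = z" "Y = PCase (map_pat f p) B" "alpha (map_proc f A) B"
    using PCase by (auto simp: alpha_shape_def)
  then obtain g C where g: "bij g" "\<forall>z\<in>fn Y. g z = z" "Z = PCase (map_pat g (map_pat f p)) C" "alpha (map_proc g B) C"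
    using h by (auto simp: alpha_shape_def)
  have fnY: "fn Y = fn X" using alpha_fn h by auto
  have "alpha (map_proc (g \<circ> f) A) (map_proc g B)" using alpha_map_proc[OF f(4) bij_is_inj[OF g(1)]] by simp
  hence "alpha (map_proc (g \<circ> f) A) C" using g(4) by (simp add: alpha.a_trans)
  moreover have "bij (g \<circ> f)" using f g by (simp add: bij_comp)
  ultimately show ?thesis using f g fnY PCase by (auto simp: alpha_shape_def intro!: exI[of _ "g \<circ> f"])
next
  case (PPar A B)
  assume h: "alpha_shape X Y" "alpha_shape Y Z"
  then obtain A' B' where 1: "Y = PPar A' B'" "alpha A A'" "alpha B B'" using PPar by (auto simp: alpha_shape_def)
  then obtain A'' B'' where 2: "Z = PPar A'' B''" "alpha A' A''" "alpha B' B''" using h by (auto simp: alpha_shape_def)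
  show ?thesis using 1 2 PPar by (auto simp: alpha_shape_def intro: alpha.a_trans)
next
  case (PRep A)
  assume h: "alpha_shape X Y" "alpha_shape Y Z"
  then obtain A' where 1: "Y = PRep A'" "alpha A A'" using PRep by (auto simp: alpha_shape_def)
  then obtain A'' where 2: "Z = PRep A''" "alpha A' A''" using h by (auto simp: alpha_shape_def)
  show ?thesis using 1 2 PRep by (auto simp: alpha_shape_def intro: alpha.a_trans)
qed (auto simp: alpha_shape_def)

lemma alpha_imp_shape: "alpha X Z \<Longrightarrow> wf_proc X \<Longrightarrow> alpha_shape X Z"
proof (induct rule: alpha.induct)
  case (a_refl P) show ?case by (rule alpha_shape_refl)
next
  case (a_sym P Q)
  have "wf_proc P" using a_sym alpha_wf by blast
  hence "alpha_shape P Q" using a_sym by blast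
  thus ?case using alpha_shape_sym a_sym \<open>wf_proc P\<close> by blast
next
  case (a_trans P Q R)
  have "wf_proc Q" using a_trans alpha_wf by blast
  thus ?case using alpha_shape_trans a_trans by blast
next
  case (a_new P P' x) thus ?case
    by (auto simp: alpha_shape_def intro!: exI[of _ id])
next
  case (a_case P P' p) thus ?case
    by (auto simp: alpha_shape_def intro!: exI[of _ id])
next
  case (a_new_ren y x P)
  have "\<forall>z\<in>fn (PNew x P). swapn x y z = z" using a_new_ren by (auto simp: swapn_def)
  thus ?case by (auto simp: alpha_shape_def swap_eq_map_proc alpha.a_refl intro!: exI[of _ "swapn x y"])
next
  case (a_case_ren x p y P)
  have "x \<notin> fn (PCase p P)" using a_case_ren by (auto simp: wf_pat_def)
  hence "\<forall>z\<in>fn (PCase p P). swapn x y z = z" using a_case_ren by (auto simp: swapn_def)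
  thus ?case by (auto simp: alpha_shape_def swap_eq_map_proc swapp_eq_map_pat alpha.a_refl intro!: exI[of _ "swapn x y"])
qed (auto simp: alpha_shape_def)

lemma alpha_PZeroD: "alpha PZero Z \<Longrightarrow> Z = PZero"
  using alpha_imp_shape[of PZero Z] by (simp add: alpha_shape_def)
lemma alpha_PParD: "alpha (PPar A B) Z \<Longrightarrow> wf_proc (PPar A B) \<Longrightarrow>
  \<exists>A' B'. Z = PPar A' B' \<and> alpha A A' \<and> alpha B B'"
  using alpha_imp_shape[of "PPar A B" Z] by (simp add: alpha_shape_def)
lemma alpha_PRepD: "alpha (PRep A) Z \<Longrightarrow> wf_proc (PRep A) \<Longrightarrow> \<exists>A'. Z = PRep A' \<and> alpha A A'"
  using alpha_imp_shape[of "PRep A" Z] by (simp add: alpha_shape_def)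
lemma alpha_PNewD: "alpha (PNew n A) Z \<Longrightarrow> wf_proc (PNew n A) \<Longrightarrow>
  \<exists>f B. bij f \<and> (\<forall>z\<in>fn (PNew n A). f z = z) \<and> Z = PNew (f n) B \<and> alpha (map_proc f A) B"
  using alpha_imp_shape[of "PNew n A" Z] by (simp add: alpha_shape_def)
lemma alpha_PCaseD: "alpha (PCase p A) Z \<Longrightarrow> wf_proc (PCase p A) \<Longrightarrow>
  \<exists>f B. bij f \<and> (\<forall>z\<in>fn (PCase p A). f z = z) \<and> Z = PCase (map_pat f p) B \<and> alpha (map_proc f A) B"
  using alpha_imp_shape[of "PCase p A" Z] by (simp add: alpha_shape_def)

lemma alpha_fresh_bnames: "finite S \<Longrightarrow> wf_proc P \<Longrightarrow> \<exists>P0. alpha P P0 \<and> bnames P0 \<inter> S = {}"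
proof (induct P arbitrary: S)
  case PZero thus ?case by (auto intro: alpha.a_refl)
next
  case (PPar A B)
  obtain A0 where A0: "alpha A A0" "bnames A0 \<inter> S = {}" using PPar.hyps(1)[of S] PPar.prems by auto
  obtain B0 where B0: "alpha B B0" "bnames B0 \<inter> S = {}" using PPar.hyps(2)[of S] PPar.prems by auto
  show ?case using A0 B0 by (auto intro!: exI[of _ "PPar A0 B0"] alpha.a_par)
next
  case (PRep A)
  obtain A0 where A0: "alpha A A0" "bnames A0 \<inter> S = {}" using PRep.hyps(1)[of S] PRep.prems by auto
  show ?case using A0 by (auto intro!: exI[of _ "PRep A0"] alpha.a_rep)
next
  case (PNew n A)
  obtain c where c: "c \<notin> S \<union> all_names A \<union> {n}" using fresh_name[of "S \<union> all_names A \<union> {n}"] PNew by auto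
  obtain A0 where A0: "alpha A A0" "bnames A0 \<inter> (S \<union> {n, c}) = {}" using PNew.hyps(1)[of "S \<union> {n,c}"] PNew.prems by auto
  have fnA0: "fn A0 = fn A" using alpha_fn A0 PNew by auto
  have "c \<notin> fn (PNew n A0)" using c fnA0 fn_subset_all_names by auto
  hence 1: "alpha (PNew n A0) (PNew c (swap n c A0))" by (rule alpha.a_new_ren)
  have "bnames (swap n c A0) = bnames A0"
    using A0 by (auto simp: swap_eq_map_proc swapn_def image_iff)
  hence "bnames (PNew c (swap n c A0)) \<inter> S = {}" using A0 c by auto
  moreover have "alpha (PNew n A) (PNew c (swap n c A0))"
    using 1 A0 by (meson alpha.a_new alpha.a_trans)
  ultimately show ?case by blast
next
  case (PCase p A)
  have wfp: "wf_pat p" using PCase by simp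
  obtain cs where cs: "length cs = length (bn_list p)" "distinct cs"
      "set cs \<inter> (S \<union> all_names (PCase p A)) = {}"
    using fresh_list[of "S \<union> all_names (PCase p A)" "length (bn_list p)"] PCase by auto
  obtain A0 where A0: "alpha A A0" "bnames A0 \<inter> (S \<union> bn p \<union> set cs) = {}"
    using PCase.hyps(1)[of "S \<union> bn p \<union> set cs"] PCase.prems by (auto simp: bn_def)
  have fnA0: "fn A0 = fn A" using alpha_fn A0 PCase by auto
  have n0: "set cs \<inter> (all_names (PCase p A0) \<union> id ` all_names (PCase p A0)) = {}"
  proof -
    have "all_names A0 \<subseteq> fn A \<union> bnames A0" using all_names_subset fnA0 by auto
    moreover have "fn A \<subseteq> all_names A" by (rule fn_subset_all_names)
    ultimately show ?thesis using cs A0 by auto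
  qed
  note cr = case_rename_swaps[of id p A0 cs, OF _ wfp _ cs(1,2) n0]
  define t1 where "t1 = swaps (zip (bn_list p) cs)"
  have 1: "alpha (PCase p A0) (PCase (map_pat t1 p) (map_proc t1 A0))" using cr(2) by (simp add: t1_def)
  have 2: "bn (map_pat t1 p) = set cs" using cr(7) by (simp add: t1_def)
  have 3: "bnames (map_proc t1 A0) = bnames A0"
  proof -
    have "\<forall>z\<in>bnames A0. t1 z = z" using cr(5) A0 by (auto simp: t1_def)
    thus ?thesis by simp
  qed
  have "bnames (PCase (map_pat t1 p) (map_proc t1 A0)) \<inter> S = {}" using 2 3 cs A0 by auto
  moreover have "alpha (PCase p A) (PCase (map_pat t1 p) (map_proc t1 A0))"
    using 1 A0 by (meson alpha.a_case alpha.a_trans)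
  ultimately show ?case by blast
qed

section \<open>Capture-avoiding substitution\<close>

definition comm_ran :: "subst \<Rightarrow> bool" where
  "comm_ran \<sigma> \<longleftrightarrow> (\<forall>q\<in>ran \<sigma>. communicable q)"

lemma is_subst_comm_ran: "is_subst \<sigma> \<Longrightarrow> comm_ran \<sigma>" by (simp add: is_subst_def comm_ran_def)

lemma comm_bn_list: "communicable q \<Longrightarrow> bn_list q = []" by (induct q) auto
lemma comm_bn: "communicable q \<Longrightarrow> bn q = {}" by (simp add: bn_def comm_bn_list)
lemma comm_pat_names: "communicable q \<Longrightarrow> pat_names q = fnp q" by (simp add: pat_names_eq comm_bn)
lemma protect_bn_list: "communicable q \<Longrightarrow> bn_list (protect q) = []" by (induct q) auto
lemma protect_fnp: "communicable q \<Longrightarrow> fnp (protect q) = fnp q" by (induct q) auto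
lemma protect_pat_names: "communicable q \<Longrightarrow> pat_names (protect q) = pat_names q" by (induct q) auto
lemma protect_pat_size: "communicable q \<Longrightarrow> pat_size (protect q) = pat_size q" by (induct q) auto
lemma protect_map_pat: "communicable q \<Longrightarrow> map_pat g (protect q) = protect (map_pat g q)" by (induct q) auto

lemma ran_names_subset: "\<sigma> x = Some q \<Longrightarrow> pat_names q \<subseteq> ran_names \<sigma>"
  by (auto simp: ran_names_def pat_names_eq dest: ranI)
lemma comm_ranD: "comm_ran \<sigma> \<Longrightarrow> \<sigma> x = Some q \<Longrightarrow> communicable q"
  by (auto simp: comm_ran_def dest: ranI)

lemma finite_fnp[simp]: "finite (fnp q)" by (metis finite_Un finite_pat_names pat_names_eq)
lemma finite_bn[simp]: "finite (bn q)" by (simp add: bn_def)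
lemma finite_ran_names: "is_subst \<sigma> \<Longrightarrow> finite (ran_names \<sigma>)"
  unfolding ran_names_def is_subst_def by (auto intro!: finite_ran)

lemma bn_list_psubst[simp]: "comm_ran \<sigma> \<Longrightarrow> bn_list (psubst \<sigma> p) = bn_list p"
  by (induct p) (auto split: option.split simp: comm_bn_list protect_bn_list dest: comm_ranD)
lemma bn_psubst[simp]: "comm_ran \<sigma> \<Longrightarrow> bn (psubst \<sigma> p) = bn p" by (simp add: bn_def)

lemma fnp_subset_pat_names: "fnp q \<subseteq> pat_names q" by (simp add: pat_names_eq)

lemma pat_names_psubst: "comm_ran \<sigma> \<Longrightarrow> pat_names (psubst \<sigma> p) \<subseteq> pat_names p \<union> ran_names \<sigma>"
proof (induct p)
  case (PVar x) show ?case
  proof (cases "\<sigma> x")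
    case (Some q) thus ?thesis using ran_names_subset[of \<sigma> x q, OF Some] by auto
  qed auto
next
  case (PProt x) show ?case
  proof (cases "\<sigma> x")
    case (Some q) thus ?thesis using ran_names_subset[of \<sigma> x q, OF Some] comm_ranD[OF PProt Some]
      by (auto simp: protect_pat_names)
  qed auto
qed auto

lemma fnp_psubst: "comm_ran \<sigma> \<Longrightarrow> fnp (psubst \<sigma> p) \<subseteq> (fnp p - dom \<sigma>) \<union> ran_names \<sigma>"
proof (induct p)
  case (PVar x) show ?case
  proof (cases "\<sigma> x")
    case (Some q) thus ?thesis using ran_names_subset[of \<sigma> x q, OF Some] fnp_subset_pat_names[of q] by auto
  qed auto
next
  case (PProt x) show ?case
  proof (cases "\<sigma> x")
    case (Some q) thus ?thesis using ran_names_subset[of \<sigma> x q, OF Some] comm_ranD[OF PProt Some] fnp_subset_pat_names[of q]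
      by (auto simp: protect_fnp)
  qed auto
qed auto

lemma pat_size_psubst: "comm_ran \<sigma> \<Longrightarrow> K \<ge> 1 \<Longrightarrow> (\<forall>q\<in>ran \<sigma>. pat_size q \<le> K) \<Longrightarrow> pat_size (psubst \<sigma> p) \<le> K * pat_size p"
proof (induct p)
  case (PComp p q) thus ?case by (auto simp: algebra_simps)
next
  case (PProt x) show ?case
  proof (cases "\<sigma> x")
    case (Some q) thus ?thesis using PProt comm_ranD[OF PProt(1) Some] ranI[of \<sigma> x q, OF Some]
      by (auto simp: protect_pat_size)
  qed (use PProt in auto)
next
  case (PVar x) show ?case
  proof (cases "\<sigma> x")
    case (Some q) thus ?thesis using PVar ranI[of \<sigma> x q, OF Some] by auto
  qed (use PVar in auto)
qed auto

lemma psubst_ident: "dom \<sigma> \<inter> pat_names p = {} \<Longrightarrow> psubst \<sigma> p = p"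
  by (induct p) (auto split: option.split)

lemma psubst_map_pat: "comm_ran \<sigma> \<Longrightarrow> inj g \<Longrightarrow> (\<forall>z\<in>dom \<sigma> \<union> ran_names \<sigma>. g z = z) \<Longrightarrow>
  psubst \<sigma> (map_pat g p) = map_pat g (psubst \<sigma> p)"
proof (induct p)
  case (PVar x)
  show ?case
  proof (cases "\<sigma> x")
    case None
    have "\<sigma> (g x) = None"
    proof (rule ccontr)
      assume "\<sigma> (g x) \<noteq> None"
      hence "g x \<in> dom \<sigma>" by auto
      hence "g (g x) = g x" using PVar by auto
      hence "g x = x" using PVar(2) by (simp add: inj_eq)
      thus False using None \<open>\<sigma> (g x) \<noteq> None\<close> by simp
    qed
    thus ?thesis using None by simp
  next
    case (Some q)
    hence "g x = x" using PVar(3) by auto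
    moreover have "map_pat g q = q" using PVar(3) ran_names_subset[of \<sigma> x q, OF Some] by (intro map_pat_ident) auto
    ultimately show ?thesis using Some by simp
  qed
next
  case (PProt x)
  show ?case
  proof (cases "\<sigma> x")
    case None
    have "\<sigma> (g x) = None"
    proof (rule ccontr)
      assume "\<sigma> (g x) \<noteq> None"
      hence "g x \<in> dom \<sigma>" by auto
      hence "g (g x) = g x" using PProt by auto
      hence "g x = x" using PProt(2) by (simp add: inj_eq)
      thus False using None \<open>\<sigma> (g x) \<noteq> None\<close> by simp
    qed
    thus ?thesis using None by simp
  next
    case (Some q)
    hence "g x = x" using PProt(3) by auto
    moreover have "map_pat g q = q" using PProt(3) ran_names_subset[of \<sigma> x q, OF Some] by (intro map_pat_ident) auto
    moreover have "communicable q" using comm_ranD[OF PProt(1) Some] .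
    ultimately show ?thesis using Some by (simp add: protect_map_pat)
  qed
qed auto

lemma nsubst_map_proc: "comm_ran \<sigma> \<Longrightarrow> inj g \<Longrightarrow> (\<forall>z\<in>dom \<sigma> \<union> ran_names \<sigma>. g z = z) \<Longrightarrow>
  nsubst \<sigma> (map_proc g P) = map_proc g (nsubst \<sigma> P)"
  by (induct P) (auto simp: psubst_map_pat)

lemma nsubst_ident: "dom \<sigma> \<inter> all_names P = {} \<Longrightarrow> nsubst \<sigma> P = P"
proof (induct P)
  case (PCase p P)
  have "psubst \<sigma> p = p" using PCase(2) by (intro psubst_ident) auto
  thus ?case using PCase by auto
qed auto


lemma fn_nsubst: "comm_ran \<sigma> \<Longrightarrow> fn (nsubst \<sigma> P) \<subseteq> (fn P - dom \<sigma>) \<union> ran_names \<sigma>"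
proof (induct P)
  case (PCase p P)
  thus ?case using fnp_psubst[OF PCase(2), of p] by auto
qed auto

lemma proc_size_nsubst: "comm_ran \<sigma> \<Longrightarrow> K \<ge> 1 \<Longrightarrow> (\<forall>q\<in>ran \<sigma>. pat_size q \<le> K) \<Longrightarrow> proc_size (nsubst \<sigma> P) \<le> K * proc_size P"
proof (induct P)
  case (PCase p P)
  have "pat_size (psubst \<sigma> p) \<le> K * pat_size p" using pat_size_psubst PCase by blast
  thus ?case using PCase by (auto simp: algebra_simps)
qed (auto simp: algebra_simps)

lemma wf_psubst: "comm_ran \<sigma> \<Longrightarrow> wf_pat p \<Longrightarrow> bn p \<inter> ran_names \<sigma> = {} \<Longrightarrow> wf_pat (psubst \<sigma> p)"
  using fnp_psubst[of \<sigma> p] by (auto simp: wf_pat_def)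

lemma wf_nsubst: "comm_ran \<sigma> \<Longrightarrow> wf_proc P \<Longrightarrow> bnames P \<inter> ran_names \<sigma> = {} \<Longrightarrow> wf_proc (nsubst \<sigma> P)"
proof (induct P)
  case (PCase p P)
  have "wf_pat (psubst \<sigma> p)" using PCase by (intro wf_psubst) auto
  thus ?case using PCase by auto
qed auto

lemma alpha_nsubst_new_rename:
  assumes cm: "comm_ran \<sigma>" and S: "dom \<sigma> \<union> ran_names \<sigma> \<subseteq> S" and nc: "n \<notin> S" "c \<notin> S"
    and c: "c \<notin> all_names (nsubst \<sigma> A)"
  shows "alpha (nsubst \<sigma> (PNew n A)) (PNew c (nsubst \<sigma> (swap n c A)))"
proof -
  have "nsubst \<sigma> (swap n c A) = swap n c (nsubst \<sigma> A)"
    unfolding swap_eq_map_proc by (rule nsubst_map_proc[OF cm inj_swapn]) (use S nc in \<open>auto simp: swapn_def\<close>)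
  moreover have "c \<notin> fn (PNew n (nsubst \<sigma> A))" using c fn_subset_all_names by auto
  ultimately show ?thesis using alpha.a_new_ren by simp
qed

lemma alpha_nsubst_case_rename:
  assumes cm: "comm_ran \<sigma>" and wf: "wf_proc (PCase p A)" and S: "dom \<sigma> \<union> ran_names \<sigma> \<subseteq> S"
    and bS: "bnames (PCase p A) \<inter> S = {}"
    and cs: "length cs = length (bn_list p)" "distinct cs"
      "set cs \<inter> (S \<union> all_names (PCase p A) \<union> all_names (nsubst \<sigma> (PCase p A))) = {}"
  defines "t \<equiv> swaps (zip (bn_list p) cs)"
  shows "alpha (nsubst \<sigma> (PCase p A)) (PCase (psubst \<sigma> (map_pat t p)) (nsubst \<sigma> (map_proc t A)))"
    and "bnames (map_proc t A) \<inter> S = {}"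
proof -
  have wfs: "wf_proc (nsubst \<sigma> (PCase p A))" using wf_nsubst[OF cm wf] bS S by blast
  have fixS: "\<forall>z\<in>S. t z = z"
    using case_rename_swaps(5)[OF inj_on_id _ _ cs(1,2), of A] wf bS cs(3) by (auto simp: t_def)
  hence fix\<sigma>: "\<forall>z\<in>dom \<sigma> \<union> ran_names \<sigma>. t z = z" using S by blast
  have inj: "inj t" by (simp add: t_def)
  have "nsubst \<sigma> (map_proc t A) = map_proc t (nsubst \<sigma> A)" by (rule nsubst_map_proc[OF cm inj fix\<sigma>])
  moreover have "psubst \<sigma> (map_pat t p) = map_pat t (psubst \<sigma> p)" by (rule psubst_map_pat[OF cm inj fix\<sigma>])
  moreover have "alpha (PCase (psubst \<sigma> p) (nsubst \<sigma> A)) (PCase (map_pat t (psubst \<sigma> p)) (map_proc t (nsubst \<sigma> A)))"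
  proof -
    have "set cs \<inter> (all_names (PCase (psubst \<sigma> p) (nsubst \<sigma> A)) \<union> id ` all_names (PCase (psubst \<sigma> p) (nsubst \<sigma> A))) = {}"
      using cs(3) by auto
    from case_rename_swaps(2)[OF inj_on_id _ _ _ cs(2) this] show ?thesis
      using wfs cs(1) cm by (simp add: t_def)
  qed
  ultimately show "alpha (nsubst \<sigma> (PCase p A)) (PCase (psubst \<sigma> (map_pat t p)) (nsubst \<sigma> (map_proc t A)))"
    by simp
  have "t w \<notin> S" if "w \<in> bnames A" for w
    using that bS fixS inj by (metis IntI empty_iff inj_eq bnames.simps(5) UnI2)
  thus "bnames (map_proc t A) \<inter> S = {}" by auto
qed

lemma alpha_nsubst_fresh_new:
  fixes n :: name and A :: proc
  defines "P0 \<equiv> PNew n A"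
  assumes IH: "\<And>Q0 Q1. proc_size Q0 < proc_size P0 \<Longrightarrow> alpha Q0 Q1 \<Longrightarrow> wf_proc Q0 \<Longrightarrow>
      bnames Q0 \<inter> S = {} \<Longrightarrow> bnames Q1 \<inter> S = {} \<Longrightarrow> alpha (nsubst \<sigma> Q0) (nsubst \<sigma> Q1)"
    and al: "alpha P0 P1" and wf0: "wf_proc P0" and cm: "comm_ran \<sigma>" and fS: "finite S"
    and dS: "dom \<sigma> \<union> ran_names \<sigma> \<subseteq> S" and b0: "bnames P0 \<inter> S = {}" and b1: "bnames P1 \<inter> S = {}"
  shows "alpha (nsubst \<sigma> P0) (nsubst \<sigma> P1)"
proof -
  have PNew: "P0 = PNew n A" by (simp add: P0_def)
  have wf1: "wf_proc P1" using al wf0 alpha_wf by blast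
  obtain f B where fB: "bij f" "\<forall>z\<in>fn (PNew n A). f z = z" "P1 = PNew (f n) B" "alpha (map_proc f A) B"
    using alpha_PNewD al wf0 PNew by blast
  have injf: "inj f" using fB bij_is_inj by auto
  obtain c where c: "c \<notin> S \<union> all_names A \<union> all_names B \<union> {n, f n} \<union> all_names (nsubst \<sigma> A) \<union> all_names (nsubst \<sigma> B)"
    using fresh_name[of "S \<union> all_names A \<union> all_names B \<union> {n, f n} \<union> all_names (nsubst \<sigma> A) \<union> all_names (nsubst \<sigma> B)"] fS
    by auto
  have wfA: "wf_proc A" using wf0 PNew by simp
  have "alpha (swap n c A) (swap (f n) c (map_proc f A))"
    using alpha_swap_new_body[OF injf wfA] fB c by auto
  moreover have "alpha (swap (f n) c (map_proc f A)) (swap (f n) c B)"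
    using alpha_map_proc[OF fB(4), of "swapn (f n) c"] by (simp add: swap_eq_map_proc)
  ultimately have body: "alpha (swap n c A) (swap (f n) c B)" by (rule alpha.a_trans)
  have nS: "n \<notin> S" "f n \<notin> S" "c \<notin> S" using b0 b1 PNew fB c by auto
  have "bnames (swap n c A) \<inter> S = {}" "bnames (swap (f n) c B) \<inter> S = {}"
    using b0 b1 PNew fB nS by (auto simp: swap_eq_map_proc swapn_def)
  hence "alpha (nsubst \<sigma> (swap n c A)) (nsubst \<sigma> (swap (f n) c B))"
    using body wfA cm fS dS PNew by (intro IH) (auto simp: swap_eq_map_proc)
  moreover have "alpha (nsubst \<sigma> P0) (PNew c (nsubst \<sigma> (swap n c A)))"
    using alpha_nsubst_new_rename[OF cm dS nS(1,3)] c PNew by auto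
  moreover have "alpha (nsubst \<sigma> P1) (PNew c (nsubst \<sigma> (swap (f n) c B)))"
    using alpha_nsubst_new_rename[OF cm dS nS(2,3)] c fB by auto
  ultimately show ?thesis by (meson alpha.a_new alpha.a_sym alpha.a_trans)
qed

lemma alpha_nsubst_fresh_case:
  fixes p :: pat and A :: proc
  defines "P0 \<equiv> PCase p A"
  assumes IH: "\<And>Q0 Q1. proc_size Q0 < proc_size P0 \<Longrightarrow> alpha Q0 Q1 \<Longrightarrow> wf_proc Q0 \<Longrightarrow>
      bnames Q0 \<inter> S = {} \<Longrightarrow> bnames Q1 \<inter> S = {} \<Longrightarrow> alpha (nsubst \<sigma> Q0) (nsubst \<sigma> Q1)"
    and al: "alpha P0 P1" and wf0: "wf_proc P0" and cm: "comm_ran \<sigma>" and fS: "finite S"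
    and dS: "dom \<sigma> \<union> ran_names \<sigma> \<subseteq> S" and b0: "bnames P0 \<inter> S = {}" and b1: "bnames P1 \<inter> S = {}"
  shows "alpha (nsubst \<sigma> P0) (nsubst \<sigma> P1)"
proof -
  have PCase: "P0 = PCase p A" by (simp add: P0_def)
  have wf1: "wf_proc P1" using al wf0 alpha_wf by blast
  obtain f B where fB: "bij f" "\<forall>z\<in>fn (PCase p A). f z = z" "P1 = PCase (map_pat f p) B" "alpha (map_proc f A) B"
    using alpha_PCaseD al wf0 PCase by blast
  have injf: "inj f" using fB bij_is_inj by auto
  define N where "N = S \<union> all_names P0 \<union> all_names P1 \<union> f ` all_names P0 \<union> all_names (nsubst \<sigma> P0) \<union> all_names (nsubst \<sigma> P1)"
  have "finite N" using fS by (simp add: N_def)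
  then obtain cs where cs: "length cs = length (bn_list p)" "distinct cs" "set cs \<inter> N = {}"
    using fresh_list by blast
  have wfP: "wf_proc (PCase p A)" and wfP1: "wf_proc (PCase (map_pat f p) B)" using wf0 wf1 PCase fB by simp_all
  have csn: "set cs \<inter> (all_names (PCase p A) \<union> f ` all_names (PCase p A)) = {}"
    using cs PCase by (auto simp: N_def)
  define t1 where "t1 = swaps (zip (bn_list p) cs)"
  define t2 where "t2 = swaps (zip (map f (bn_list p)) cs)"
  have body: "alpha (map_proc t1 A) (map_proc t2 B)"
    using case_rename_body[OF injf wfP fB(2) cs(1,2) csn] alpha_map_proc[OF fB(4), of t2]
    by (simp add: t1_def t2_def) (metis alpha.a_trans map_proc_comp)
  have cs0: "set cs \<inter> (S \<union> all_names (PCase p A) \<union> all_names (nsubst \<sigma> (PCase p A))) = {}"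
    and cs1: "set cs \<inter> (S \<union> all_names (PCase (map_pat f p) B) \<union> all_names (nsubst \<sigma> (PCase (map_pat f p) B))) = {}"
    using cs PCase fB(3) by (auto simp: N_def)
  have len1: "length cs = length (bn_list (map_pat f p))" using cs(1) by simp
  have bP: "bnames (PCase p A) \<inter> S = {}" and bP1: "bnames (PCase (map_pat f p) B) \<inter> S = {}"
    using b0 b1 PCase fB(3) by simp_all
  note r0 = alpha_nsubst_case_rename[OF cm wfP dS bP cs(1,2) cs0, folded t1_def]
  note r1 = alpha_nsubst_case_rename[OF cm wfP1 dS bP1 len1 cs(2) cs1, unfolded bn_list_map_pat, folded t2_def]
  have "alpha (nsubst \<sigma> (map_proc t1 A)) (nsubst \<sigma> (map_proc t2 B))"
    using body r0(2) r1(2) wfP cm fS dS PCase by (intro IH) (auto simp: t1_def)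
  moreover have "map_pat t1 p = map_pat t2 (map_pat f p)"
    using case_rename_swaps(1)[OF injf _ fB(2) cs(1,2) csn] wfP by (simp add: t1_def t2_def)
  ultimately have "alpha (PCase (psubst \<sigma> (map_pat t1 p)) (nsubst \<sigma> (map_proc t1 A)))
              (PCase (psubst \<sigma> (map_pat t2 (map_pat f p))) (nsubst \<sigma> (map_proc t2 B)))"
    by (simp add: alpha.a_case)
  thus ?thesis unfolding PCase fB(3) using r0(1) r1(1) by (meson alpha.a_sym alpha.a_trans)
qed

lemma alpha_nsubst_fresh:
  assumes "alpha P0 P1" "wf_proc P0" "comm_ran \<sigma>" "finite S" "dom \<sigma> \<union> ran_names \<sigma> \<subseteq> S"
    "bnames P0 \<inter> S = {}" "bnames P1 \<inter> S = {}"
  shows "alpha (nsubst \<sigma> P0) (nsubst \<sigma> P1)"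
  using assms
proof (induct "proc_size P0" arbitrary: P0 P1 rule: less_induct)
  case (less P0 P1)
  note al = less(2) and wf0 = less(3) and cm = less(4) and fS = less(5) and dS = less(6)
    and b0 = less(7) and b1 = less(8)
  have IH: "\<And>Q0 Q1. proc_size Q0 < proc_size P0 \<Longrightarrow> alpha Q0 Q1 \<Longrightarrow> wf_proc Q0 \<Longrightarrow>
      bnames Q0 \<inter> S = {} \<Longrightarrow> bnames Q1 \<inter> S = {} \<Longrightarrow> alpha (nsubst \<sigma> Q0) (nsubst \<sigma> Q1)"
    using less(1) cm fS dS by blast
  show ?case
  proof (cases P0)
    case PZero
    hence "P1 = PZero" using al alpha_PZeroD by blast
    thus ?thesis using PZero by (simp add: alpha.a_refl)
  next
    case (PPar A B)
    obtain A' B' where 1: "P1 = PPar A' B'" "alpha A A'" "alpha B B'" using alpha_PParD al wf0 PPar by blast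
    have "alpha (nsubst \<sigma> A) (nsubst \<sigma> A')" using 1 wf0 b0 b1 PPar by (intro IH) auto
    moreover have "alpha (nsubst \<sigma> B) (nsubst \<sigma> B')" using 1 wf0 b0 b1 PPar by (intro IH) auto
    ultimately show ?thesis using 1 PPar by (simp add: alpha.a_par)
  next
    case (PRep A)
    obtain A' where 1: "P1 = PRep A'" "alpha A A'" using alpha_PRepD al wf0 PRep by blast
    have "alpha (nsubst \<sigma> A) (nsubst \<sigma> A')" using 1 wf0 b0 b1 PRep by (intro IH) auto
    thus ?thesis using 1 PRep by (simp add: alpha.a_rep)
  next
    case (PNew n A)
    show ?thesis unfolding PNew
      by (rule alpha_nsubst_fresh_new[OF IH[unfolded PNew] al[unfolded PNew] wf0[unfolded PNew] cm fS dS b0[unfolded PNew] b1])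
  next
    case (PCase p A)
    show ?thesis unfolding PCase
      by (rule alpha_nsubst_fresh_case[OF IH[unfolded PCase] al[unfolded PCase] wf0[unfolded PCase] cm fS dS b0[unfolded PCase] b1])
  qed
qed

abbreviation subst_names :: "subst \<Rightarrow> name set" where "subst_names \<sigma> \<equiv> dom \<sigma> \<union> ran_names \<sigma>"

lemma finite_subst_names: "is_subst \<sigma> \<Longrightarrow> finite (subst_names \<sigma>)"
  using finite_ran_names by (auto simp: is_subst_def)

lemma csubst_exists: "is_subst \<sigma> \<Longrightarrow> wf_proc P \<Longrightarrow> \<exists>Z. csubst \<sigma> P Z"
  using alpha_fresh_bnames[OF finite_subst_names] by (fastforce simp: csubst_def)

lemma csubst_unique: "csubst \<sigma> P Z1 \<Longrightarrow> csubst \<sigma> P Z2 \<Longrightarrow> wf_proc P \<Longrightarrow> is_subst \<sigma> \<Longrightarrow> alpha Z1 Z2"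
proof -
  assume a: "csubst \<sigma> P Z1" "csubst \<sigma> P Z2" "wf_proc P" "is_subst \<sigma>"
  then obtain P0 P1 where p: "alpha P P0" "bnames P0 \<inter> subst_names \<sigma> = {}" "Z1 = nsubst \<sigma> P0"
    "alpha P P1" "bnames P1 \<inter> subst_names \<sigma> = {}" "Z2 = nsubst \<sigma> P1" by (auto simp: csubst_def)
  have "alpha P0 P1" using p by (meson alpha.a_sym alpha.a_trans)
  moreover have "wf_proc P0" using p a alpha_wf by blast
  ultimately show ?thesis using alpha_nsubst_fresh[of P0 P1 \<sigma> "subst_names \<sigma>"] p a finite_subst_names is_subst_comm_ran by auto
qed

lemma csubst_alpha: "alpha P Q \<Longrightarrow> csubst \<sigma> Q Z \<Longrightarrow> csubst \<sigma> P Z"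
  by (auto simp: csubst_def intro: alpha.a_trans)

lemma csubst_intro: "alpha P P0 \<Longrightarrow> bnames P0 \<inter> subst_names \<sigma> = {} \<Longrightarrow> csubst \<sigma> P (nsubst \<sigma> P0)"
  by (auto simp: csubst_def)

lemma csubst_proc_size: "csubst \<sigma> P Z \<Longrightarrow> comm_ran \<sigma> \<Longrightarrow> K \<ge> 1 \<Longrightarrow> (\<forall>q\<in>ran \<sigma>. pat_size q \<le> K) \<Longrightarrow> proc_size Z \<le> K * proc_size P"
proof -
  assume a: "csubst \<sigma> P Z" "comm_ran \<sigma>" "K \<ge> 1" "\<forall>q\<in>ran \<sigma>. pat_size q \<le> K"
  then obtain P0 where p: "alpha P P0" "Z = nsubst \<sigma> P0" by (auto simp: csubst_def)
  have "proc_size P0 = proc_size P" using alpha_sizes p by auto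
  thus ?thesis using proc_size_nsubst[OF a(2-4), of P0] p by simp
qed

lemma csubst_fn: "csubst \<sigma> P Z \<Longrightarrow> wf_proc P \<Longrightarrow> comm_ran \<sigma> \<Longrightarrow> fn Z \<subseteq> (fn P - dom \<sigma>) \<union> ran_names \<sigma>"
proof -
  assume a: "csubst \<sigma> P Z" "wf_proc P" "comm_ran \<sigma>"
  then obtain P0 where p: "alpha P P0" "Z = nsubst \<sigma> P0" by (auto simp: csubst_def)
  have "fn P0 = fn P" using alpha_fn p a by auto
  thus ?thesis using fn_nsubst[OF a(3), of P0] p by auto
qed

lemma csubst_wf: "csubst \<sigma> P Z \<Longrightarrow> wf_proc P \<Longrightarrow> comm_ran \<sigma> \<Longrightarrow> wf_proc Z"
proof -
  assume a: "csubst \<sigma> P Z" "wf_proc P" "comm_ran \<sigma>"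
  then obtain P0 where p: "alpha P P0" "Z = nsubst \<sigma> P0" "bnames P0 \<inter> subst_names \<sigma> = {}" by (auto simp: csubst_def)
  have "wf_proc P0" using alpha_wf p a by blast
  thus ?thesis using wf_nsubst[OF a(3)] p by auto
qed

lemma scong_wf_fn: "scong P Q \<Longrightarrow> (wf_proc P \<longleftrightarrow> wf_proc Q) \<and> (wf_proc P \<longrightarrow> fn P = fn Q)"
proof (induct rule: scong.induct)
  case (s_alpha P Q) thus ?case using alpha_wf alpha_fn by blast
next
  case (s_extr n P Q) thus ?case by auto
qed auto

lemma scong_wf: "scong P Q \<Longrightarrow> wf_proc P \<Longrightarrow> wf_proc Q" using scong_wf_fn by blast

section \<open>Substitution respects structural congruence\<close>

definition csubst_related :: "subst \<Rightarrow> proc \<Rightarrow> proc \<Rightarrow> bool" where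
  "csubst_related \<sigma> X R \<longleftrightarrow> (\<exists>Z Z'. csubst \<sigma> X Z \<and> csubst \<sigma> R Z' \<and> scong Z Z')"

lemma csubst_zero: "csubst \<sigma> PZero PZero"
  using csubst_intro[of PZero PZero \<sigma>] by (simp add: alpha.a_refl)

lemma csubst_par: "csubst \<sigma> A Z1 \<Longrightarrow> csubst \<sigma> B Z2 \<Longrightarrow> csubst \<sigma> (PPar A B) (PPar Z1 Z2)"
proof -
  assume "csubst \<sigma> A Z1" "csubst \<sigma> B Z2"
  then obtain A0 B0 where "alpha A A0" "bnames A0 \<inter> subst_names \<sigma> = {}" "Z1 = nsubst \<sigma> A0"
    "alpha B B0" "bnames B0 \<inter> subst_names \<sigma> = {}" "Z2 = nsubst \<sigma> B0" by (auto simp: csubst_def)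
  thus ?thesis using csubst_intro[of "PPar A B" "PPar A0 B0" \<sigma>] by (auto intro: alpha.a_par)
qed

lemma csubst_rep: "csubst \<sigma> A Z1 \<Longrightarrow> csubst \<sigma> (PRep A) (PRep Z1)"
proof -
  assume "csubst \<sigma> A Z1"
  then obtain A0 where "alpha A A0" "bnames A0 \<inter> subst_names \<sigma> = {}" "Z1 = nsubst \<sigma> A0"
    by (auto simp: csubst_def)
  thus ?thesis using csubst_intro[of "PRep A" "PRep A0" \<sigma>] by (auto intro: alpha.a_rep)
qed

lemma csubst_new: "c \<notin> subst_names \<sigma> \<Longrightarrow> c \<notin> fn (PNew y A) \<Longrightarrow> csubst \<sigma> (swap y c A) Z \<Longrightarrow>
  csubst \<sigma> (PNew y A) (PNew c Z)"
proof -
  assume a: "c \<notin> subst_names \<sigma>" "c \<notin> fn (PNew y A)" "csubst \<sigma> (swap y c A) Z"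
  then obtain B0 where b: "alpha (swap y c A) B0" "bnames B0 \<inter> subst_names \<sigma> = {}" "Z = nsubst \<sigma> B0"
    by (auto simp: csubst_def)
  have "alpha (PNew y A) (PNew c (swap y c A))" by (rule alpha.a_new_ren[OF a(2)])
  hence "alpha (PNew y A) (PNew c B0)" using b by (meson alpha.a_new alpha.a_trans)
  thus ?thesis using csubst_intro[of "PNew y A" "PNew c B0" \<sigma>] a b by auto
qed

lemma csubst_case: "alpha (PCase q A) (PCase q' A1) \<Longrightarrow> bn q' \<inter> subst_names \<sigma> = {} \<Longrightarrow> csubst \<sigma> A1 Z \<Longrightarrow>
  csubst \<sigma> (PCase q A) (PCase (psubst \<sigma> q') Z)"
proof -
  assume a: "alpha (PCase q A) (PCase q' A1)" "bn q' \<inter> subst_names \<sigma> = {}" "csubst \<sigma> A1 Z"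
  then obtain B0 where b: "alpha A1 B0" "bnames B0 \<inter> subst_names \<sigma> = {}" "Z = nsubst \<sigma> B0"
    by (auto simp: csubst_def)
  have "alpha (PCase q A) (PCase q' B0)" using a b by (meson alpha.a_case alpha.a_trans)
  thus ?thesis using csubst_intro[of "PCase q A" "PCase q' B0" \<sigma>] a b by auto
qed

lemma csubst_related_alpha:
  assumes "alpha P Q" "wf_proc P" "is_subst \<sigma>"
  shows "csubst_related \<sigma> P Q"
proof -
  obtain Z where "csubst \<sigma> Q Z" using csubst_exists assms alpha_wf by blast
  thus ?thesis using assms(1) csubst_alpha scong.s_refl unfolding csubst_related_def by blast
qed

lemma csubst_related_sym: "csubst_related \<sigma> X R \<Longrightarrow> csubst_related \<sigma> R X"
  by (auto simp: csubst_related_def intro: scong.s_sym)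

lemma csubst_related_trans:
  assumes "csubst_related \<sigma> P Q" "csubst_related \<sigma> Q R" "wf_proc Q" "is_subst \<sigma>"
  shows "csubst_related \<sigma> P R"
proof -
  obtain Z1 Z1' where 1: "csubst \<sigma> P Z1" "csubst \<sigma> Q Z1'" "scong Z1 Z1'"
    using assms(1) by (auto simp: csubst_related_def)
  obtain Z2 Z2' where 2: "csubst \<sigma> Q Z2" "csubst \<sigma> R Z2'" "scong Z2 Z2'"
    using assms(2) by (auto simp: csubst_related_def)
  have "alpha Z1' Z2" using csubst_unique 1(2) 2(1) assms(3,4) by blast
  hence "scong Z1 Z2'" using 1 2 by (meson scong.s_alpha scong.s_trans)
  thus ?thesis using 1 2 by (auto simp: csubst_related_def)
qed

lemma csubst_related_par: "csubst_related \<sigma> P P' \<Longrightarrow> csubst_related \<sigma> Q Q' \<Longrightarrow> csubst_related \<sigma> (PPar P Q) (PPar P' Q')"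
  unfolding csubst_related_def by (meson csubst_par scong.s_par)

lemma csubst_related_rep: "csubst_related \<sigma> P P' \<Longrightarrow> csubst_related \<sigma> (PRep P) (PRep P')"
  unfolding csubst_related_def by (meson csubst_rep scong.s_rep)

lemma csubst_related_new:
  assumes \<sigma>: "is_subst \<sigma>" and IH: "\<And>c. csubst_related \<sigma> (swap y c A) (swap y c A')"
  shows "csubst_related \<sigma> (PNew y A) (PNew y A')"
proof -
  obtain c where c: "c \<notin> subst_names \<sigma> \<union> all_names A \<union> all_names A' \<union> {y}"
    using fresh_name[of "subst_names \<sigma> \<union> all_names A \<union> all_names A' \<union> {y}"] finite_subst_names[OF \<sigma>] by auto
  obtain Z Z' where z: "csubst \<sigma> (swap y c A) Z" "csubst \<sigma> (swap y c A') Z'" "scong Z Z'"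
    using IH[of c] by (auto simp: csubst_related_def)
  have "csubst \<sigma> (PNew y A) (PNew c Z)"
    using csubst_new[of c \<sigma> y A Z] c z fn_subset_all_names by auto
  moreover have "csubst \<sigma> (PNew y A') (PNew c Z')"
    using csubst_new[of c \<sigma> y A' Z'] c z fn_subset_all_names by auto
  ultimately show ?thesis using z unfolding csubst_related_def by (auto intro: scong.s_new)
qed

lemma csubst_related_case:
  assumes \<sigma>: "is_subst \<sigma>" and wf: "wf_proc (PCase q A)"
    and IH: "\<And>t. bij t \<Longrightarrow> csubst_related \<sigma> (map_proc t A) (map_proc t A')"
  shows "csubst_related \<sigma> (PCase q A) (PCase q A')"
proof -
  obtain cs where cs: "length cs = length (bn_list q)" "distinct cs"
      "set cs \<inter> (subst_names \<sigma> \<union> all_names (PCase q A) \<union> all_names (PCase q A')) = {}"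
    using fresh_list[of "subst_names \<sigma> \<union> all_names (PCase q A) \<union> all_names (PCase q A')" "length (bn_list q)"]
      finite_subst_names[OF \<sigma>] by auto
  define t where "t = swaps (zip (bn_list q) cs)"
  have wfq: "wf_pat q" using wf by simp
  have id_fix: "\<forall>z\<in>fn (PCase q B). id z = z" for B by simp
  have "set cs \<inter> (all_names (PCase q B) \<union> id ` all_names (PCase q B)) = {}"
    if "B \<in> {A, A'}" for B using cs that by auto
  note r = case_rename_swaps[OF inj_on_id wfq id_fix cs(1,2) this, folded t_def, simplified]
  have bt: "bn (map_pat t q) \<inter> subst_names \<sigma> = {}" using r(7)[of A] cs by auto
  obtain Z Z' where z: "csubst \<sigma> (map_proc t A) Z" "csubst \<sigma> (map_proc t A') Z'" "scong Z Z'"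
    using IH[of t] by (auto simp: csubst_related_def t_def)
  have "csubst \<sigma> (PCase q A) (PCase (psubst \<sigma> (map_pat t q)) Z)"
    using csubst_case[OF r(2)[of A] bt] z by simp
  moreover have "csubst \<sigma> (PCase q A') (PCase (psubst \<sigma> (map_pat t q)) Z')"
    using csubst_case[OF r(2)[of A'] bt] z by simp
  ultimately show ?thesis using z unfolding csubst_related_def by (auto intro: scong.s_case)
qed

lemma csubst_related_par_zero: "is_subst \<sigma> \<Longrightarrow> wf_proc P \<Longrightarrow> csubst_related \<sigma> (PPar P PZero) P"
  unfolding csubst_related_def using csubst_exists csubst_par csubst_zero scong.s_par_zero by meson

lemma csubst_related_par_comm: "is_subst \<sigma> \<Longrightarrow> wf_proc P \<Longrightarrow> wf_proc Q \<Longrightarrow> csubst_related \<sigma> (PPar P Q) (PPar Q P)"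
  unfolding csubst_related_def using csubst_exists csubst_par scong.s_par_comm by meson

lemma csubst_related_par_assoc:
  assumes "is_subst \<sigma>" "wf_proc P" "wf_proc Q" "wf_proc R"
  shows "csubst_related \<sigma> (PPar P (PPar Q R)) (PPar (PPar P Q) R)"
proof -
  obtain Z1 Z2 Z3 where "csubst \<sigma> P Z1" "csubst \<sigma> Q Z2" "csubst \<sigma> R Z3"
    using csubst_exists assms by meson
  thus ?thesis unfolding csubst_related_def using csubst_par scong.s_par_assoc by meson
qed

lemma csubst_related_rep_unfold: "is_subst \<sigma> \<Longrightarrow> wf_proc P \<Longrightarrow> csubst_related \<sigma> (PRep P) (PPar P (PRep P))"
  unfolding csubst_related_def using csubst_exists csubst_par csubst_rep scong.s_rep_unf by meson

lemma csubst_related_new_zero: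
  assumes \<sigma>: "is_subst \<sigma>"
  shows "csubst_related \<sigma> (PNew n PZero) PZero"
proof -
  obtain c where c: "c \<notin> subst_names \<sigma>" using fresh_name[OF finite_subst_names[OF \<sigma>]] by auto
  have "csubst \<sigma> (PNew n PZero) (PNew c PZero)"
    using csubst_new[of c \<sigma> n PZero PZero] c csubst_zero by (simp add: swap_eq_map_proc)
  thus ?thesis unfolding csubst_related_def using csubst_zero scong.s_new_zero by blast
qed

lemma csubst_related_new_comm:
  assumes \<sigma>: "is_subst \<sigma>" and wf: "wf_proc Q"
  shows "csubst_related \<sigma> (PNew a (PNew b Q)) (PNew b (PNew a Q))"
proof (cases "a = b")
  case True
  thus ?thesis using csubst_related_alpha[OF alpha.a_refl _ \<sigma>] wf by simp
next
  case False
  have fS: "finite (subst_names \<sigma>)" using finite_subst_names \<sigma> by blast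
  obtain c where c: "c \<notin> subst_names \<sigma> \<union> all_names Q \<union> {a, b}"
    using fresh_name[of "subst_names \<sigma> \<union> all_names Q \<union> {a, b}"] fS by auto
  obtain d where d: "d \<notin> subst_names \<sigma> \<union> all_names Q \<union> {a, b, c}"
    using fresh_name[of "subst_names \<sigma> \<union> all_names Q \<union> {a, b, c}"] fS by auto
  define T where "T = swap b d (swap a c Q)"
  have T2: "swap a c (swap b d Q) = T"
  proof -
    have "swapn a c \<circ> swapn b d = swapn b d \<circ> swapn a c"
      using False c d by (auto simp: fun_eq_iff swapn_def)
    thus ?thesis by (simp add: T_def swap_eq_map_proc)
  qed
  have "wf_proc T" using wf by (simp add: T_def swap_eq_map_proc inj_compose)
  then obtain Z where z: "csubst \<sigma> T Z" using csubst_exists \<sigma> by blast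
  have fnQ: "fn Q \<subseteq> all_names Q" by (rule fn_subset_all_names)
  have "csubst \<sigma> (PNew b (swap a c Q)) (PNew d Z)"
    by (rule csubst_new) (use d z fnQ in \<open>auto simp: T_def swap_eq_map_proc swapn_def\<close>)
  hence L: "csubst \<sigma> (PNew a (PNew b Q)) (PNew c (PNew d Z))"
    by (intro csubst_new) (use c fnQ False in \<open>auto simp: swap_eq_map_proc\<close>)
  have "csubst \<sigma> (PNew a (swap b d Q)) (PNew c Z)"
    by (rule csubst_new) (use c d z fnQ T2 in \<open>auto simp: swap_eq_map_proc swapn_def\<close>)
  hence R: "csubst \<sigma> (PNew b (PNew a Q)) (PNew d (PNew c Z))"
    by (intro csubst_new) (use d fnQ False in \<open>auto simp: swap_eq_map_proc\<close>)
  show ?thesis unfolding csubst_related_def using L R scong.s_new_comm by blast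
qed

lemma csubst_related_extrude:
  assumes \<sigma>: "is_subst \<sigma>" and wf: "wf_proc A" "wf_proc B" and yA: "y \<notin> fn A"
  shows "csubst_related \<sigma> (PPar A (PNew y B)) (PNew y (PPar A B))"
proof -
  obtain c where c: "c \<notin> subst_names \<sigma> \<union> all_names A \<union> all_names B \<union> {y}"
    using fresh_name[of "subst_names \<sigma> \<union> all_names A \<union> all_names B \<union> {y}"] finite_subst_names[OF \<sigma>] by auto
  have cA: "c \<notin> fn A" using c fn_subset_all_names by auto
  obtain ZA where za: "csubst \<sigma> A ZA" using csubst_exists \<sigma> wf by blast
  obtain ZB where zb: "csubst \<sigma> (swap y c B) ZB" using csubst_exists \<sigma> wf
    by (metis swap_eq_map_proc wf_map_proc inj_swapn)
  have "\<forall>z\<in>fn A. swapn y c z = z" using yA cA by (auto simp: swapn_def)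
  hence "alpha A (swap y c A)" using alpha_map_proc_fixing_fn[OF inj_swapn wf(1)] by (simp add: swap_eq_map_proc)
  hence za': "csubst \<sigma> (swap y c A) ZA" using za csubst_alpha alpha.a_sym by blast
  have "csubst \<sigma> (PNew y B) (PNew c ZB)"
    by (rule csubst_new) (use c zb fn_subset_all_names in auto)
  hence L: "csubst \<sigma> (PPar A (PNew y B)) (PPar ZA (PNew c ZB))" using za csubst_par by blast
  have "csubst \<sigma> (swap y c (PPar A B)) (PPar ZA ZB)" using csubst_par[OF za' zb] by (simp add: swap_eq_map_proc)
  hence R: "csubst \<sigma> (PNew y (PPar A B)) (PNew c (PPar ZA ZB))"
    by (intro csubst_new) (use c fn_subset_all_names in auto)
  have "c \<notin> fn ZA" using csubst_fn[OF za wf(1) is_subst_comm_ran[OF \<sigma>]] cA c by auto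
  hence "scong (PPar ZA (PNew c ZB)) (PNew c (PPar ZA ZB))" by (rule scong.s_extr)
  thus ?thesis unfolding csubst_related_def using L R by blast
qed

text \<open>Generalised over bijections so that, in the binder cases, the induction hypothesis applies to
  bodies whose bound name has been renamed away from the substitution.\<close>

lemma csubst_related_scong:
  "scong X R \<Longrightarrow> is_subst \<sigma> \<Longrightarrow> wf_proc X \<Longrightarrow> bij f \<Longrightarrow> csubst_related \<sigma> (map_proc f X) (map_proc f R)"
proof (induct arbitrary: f rule: scong.induct)
  case (s_alpha P Q) thus ?case by (simp add: csubst_related_alpha alpha_map_proc bij_is_inj)
next
  case (s_refl P) thus ?case by (simp add: csubst_related_alpha alpha.a_refl bij_is_inj)
next
  case (s_sym P Q) thus ?case using scong_wf csubst_related_sym scong.s_sym by blast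
next
  case (s_trans P Q R)
  have wfQ: "wf_proc (map_proc f Q)" using s_trans scong_wf by (simp add: bij_is_inj)
  have "csubst_related \<sigma> (map_proc f P) (map_proc f Q)" "csubst_related \<sigma> (map_proc f Q) (map_proc f R)"
    using s_trans scong_wf by blast+
  thus ?case using csubst_related_trans wfQ s_trans(5) by blast
next
  case (s_par P P' Q Q') thus ?case by (simp add: csubst_related_par)
next
  case (s_rep P P') thus ?case by (simp add: csubst_related_rep)
next
  case (s_new P P' x)
  have "csubst_related \<sigma> (swap (f x) c (map_proc f P)) (swap (f x) c (map_proc f P'))" for c
  proof -
    have "bij (swapn (f x) c \<circ> f)" using s_new(5) by (simp add: bij_comp)
    thus ?thesis using s_new(2)[of "swapn (f x) c \<circ> f"] s_new(3,4) by (simp add: swap_eq_map_proc comp_def)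
  qed
  thus ?case using csubst_related_new s_new by simp
next
  case (s_case P P' p)
  have "csubst_related \<sigma> (map_proc t (map_proc f P)) (map_proc t (map_proc f P'))" if "bij t" for t
    using s_case(2)[of "t \<circ> f"] s_case(3-5) that bij_comp[OF s_case(5) that] by (simp add: comp_def)
  thus ?case using csubst_related_case s_case by (simp add: bij_is_inj)
next
  case (s_par_zero P) thus ?case by (simp add: csubst_related_par_zero bij_is_inj)
next
  case (s_par_comm P Q) thus ?case by (simp add: csubst_related_par_comm bij_is_inj)
next
  case (s_par_assoc P Q R) thus ?case by (simp add: csubst_related_par_assoc bij_is_inj)
next
  case (s_new_zero n) thus ?case by (simp add: csubst_related_new_zero)
next
  case (s_new_comm n m P) thus ?case by (simp add: csubst_related_new_comm bij_is_inj)
next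
  case (s_rep_unf P) thus ?case by (simp add: csubst_related_rep_unfold bij_is_inj)
next
  case (s_extr n P Q)
  have "f n \<notin> fn (map_proc f P)" using s_extr by (auto simp: bij_is_inj inj_eq)
  thus ?case using s_extr by (simp add: csubst_related_extrude bij_is_inj)
qed

lemma csubst_scong: "scong X R \<Longrightarrow> wf_proc X \<Longrightarrow> is_subst \<sigma> \<Longrightarrow> csubst \<sigma> X Z \<Longrightarrow>
  \<exists>Z'. csubst \<sigma> R Z' \<and> scong Z Z'"
proof -
  assume a: "scong X R" "wf_proc X" "is_subst \<sigma>" "csubst \<sigma> X Z"
  have "csubst_related \<sigma> (map_proc id X) (map_proc id R)" using csubst_related_scong[OF a(1) a(3) a(2) bij_id] by simp
  then obtain Z0 Z0' where z: "csubst \<sigma> X Z0" "csubst \<sigma> R Z0'" "scong Z0 Z0'"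
    by (auto simp: csubst_related_def)
  have "alpha Z Z0" using csubst_unique a z by blast
  thus ?thesis using z by (meson scong.s_alpha scong.s_trans)
qed

section \<open>Unification and labels\<close>

lemma munion_Some: "munion s1 s2 = Some s \<Longrightarrow> s = s1 ++ s2"
  by (auto simp: munion_def split: if_splits)

definition unifier_ok :: "subst \<Rightarrow> pat \<Rightarrow> pat \<Rightarrow> bool" where
  "unifier_ok \<sigma> p q \<longleftrightarrow> dom \<sigma> = bn p \<and> (\<forall>x r. \<sigma> x = Some r \<longrightarrow> communicable r \<and> pat_size r \<le> pat_size q \<and> pat_names r \<subseteq> fnp q)"

lemma unify_unifier_ok: "unify p q = Some (\<sigma>, \<rho>) \<Longrightarrow> unifier_ok \<sigma> p q \<and> unifier_ok \<rho> q p"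
proof (induct p q arbitrary: \<sigma> \<rho> rule: unify.induct)
  case (7 p1 p2 q1 q2)
  obtain s1 r1 s2 r2 where u: "unify p1 q1 = Some (s1, r1)" "unify p2 q2 = Some (s2, r2)"
    "munion s1 s2 = Some \<sigma>" "munion r1 r2 = Some \<rho>"
    using 7(3) by (auto split: option.splits prod.splits)
  have i1: "unifier_ok s1 p1 q1 \<and> unifier_ok r1 q1 p1" using 7(1) u by blast
  have i2: "unifier_ok s2 p2 q2 \<and> unifier_ok r2 q2 p2" using 7(2) u by blast
  have e: "\<sigma> = s1 ++ s2" "\<rho> = r1 ++ r2" using u munion_Some by auto
  show ?case using i1 i2 unfolding e unifier_ok_def
    by (auto simp: map_add_Some_iff dom_map_add) force+
qed (auto simp: unifier_ok_def comm_bn comm_pat_names split: if_splits)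

lemma unifier_ok_is_subst: "unifier_ok \<sigma> p q \<Longrightarrow> is_subst \<sigma>"
  by (auto simp: unifier_ok_def is_subst_def ran_def)

lemma unifier_ok_ran_names: "unifier_ok \<sigma> p q \<Longrightarrow> ran_names \<sigma> \<subseteq> fnp q"
proof
  fix z assume u: "unifier_ok \<sigma> p q" and z: "z \<in> ran_names \<sigma>"
  then obtain r where r: "r \<in> ran \<sigma>" "z \<in> fnp r \<union> bn r" by (auto simp: ran_names_def)
  then obtain x where "\<sigma> x = Some r" by (auto simp: ran_def)
  hence "pat_names r \<subseteq> fnp q" using u by (auto simp: unifier_ok_def)
  thus "z \<in> fnp q" using r by (auto simp: pat_names_eq)
qed

lemma unifier_ok_pat_size: "unifier_ok \<sigma> p q \<Longrightarrow> \<forall>r\<in>ran \<sigma>. pat_size r \<le> pat_size q"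
  by (auto simp: unifier_ok_def ran_def)


lemma finite_vn[simp]: "finite (vn p)" by (induct p) auto

lemma card_vn_le: "card (vn p) \<le> pat_size p"
proof (induct p)
  case (PComp p q)
  have "card (vn (PComp p q)) \<le> card (vn p) + card (vn q)" by (simp add: card_Un_le)
  thus ?case using PComp by simp
qed (auto simp: card_insert_if)

definition label_ok :: "proc \<Rightarrow> name list \<Rightarrow> pat \<Rightarrow> bool" where
  "label_ok Y ns p \<longleftrightarrow> distinct ns \<and> set ns \<subseteq> vn p \<and> fnp p \<subseteq> fn Y \<union> set ns \<and> pat_size p \<le> max_pat_size Y \<and> wf_pat p"

lemma label_ok_len: "label_ok Y ns p \<Longrightarrow> length ns \<le> max_pat_size Y"
proof -
  assume "label_ok Y ns p"
  hence "length ns = card (set ns)" "set ns \<subseteq> vn p" "pat_size p \<le> max_pat_size Y" by (auto simp: label_ok_def distinct_card)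
  moreover have "card (set ns) \<le> card (vn p)" using calculation by (intro card_mono) auto
  ultimately show ?thesis using card_vn_le[of p] by linarith
qed

lemma ltr_wf_label: "ltr Y \<mu> X \<Longrightarrow> wf_proc Y \<Longrightarrow> wf_proc X \<and> (\<forall>ns p. \<mu> = Lab ns p \<longrightarrow> label_ok Y ns p)"
proof (induct rule: ltr.induct)
  case (t_case p P) thus ?case by (auto simp: label_ok_def fnp_def)
next
  case (t_resnon P \<mu> P' n) thus ?case by (auto simp: label_ok_def)
next
  case (t_open P ns p P' m) thus ?case by (auto simp: label_ok_def)
next
  case (t_unify P ms p P' Q ns q Q' \<sigma> \<rho> P'' Q'')
  have u: "unifier_ok \<sigma> p q" "unifier_ok \<rho> q p" using unify_unifier_ok t_unify by auto
  have "wf_proc P''" using csubst_wf t_unify unifier_ok_is_subst[OF u(1)] is_subst_comm_ran by auto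
  moreover have "wf_proc Q''" using csubst_wf t_unify unifier_ok_is_subst[OF u(2)] is_subst_comm_ran by auto
  moreover have "\<And>L X. wf_proc (News L X) = wf_proc X" by (induct_tac L) auto
  ultimately show ?case by simp
next
  case (t_rep P \<mu> P') thus ?case by (auto simp: label_ok_def)
next
  case (t_alpha P Q \<mu> Q' P')
  have "wf_proc Q" using t_alpha alpha_wf by blast
  moreover have "fn P = fn Q" "max_pat_size P = max_pat_size Q" using t_alpha alpha_fn alpha_sizes by auto
  ultimately show ?case using t_alpha alpha_wf by (auto simp: label_ok_def)
qed (auto simp: label_ok_def)

lemma ltr_wf: "ltr Y \<mu> X \<Longrightarrow> wf_proc Y \<Longrightarrow> wf_proc X" using ltr_wf_label by blast
lemma ltr_label_ok: "ltr Y (Lab ns p) X \<Longrightarrow> wf_proc Y \<Longrightarrow> label_ok Y ns p" using ltr_wf_label by blast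


lemmas scong_trans[trans] = scong.s_trans

lemma fn_News[simp]: "fn (News L X) = fn X - set L" by (induct L) auto
lemma proc_size_News[simp]: "proc_size (News L X) = length L + proc_size X" by (induct L) auto
lemma wf_News[simp]: "wf_proc (News L X) = wf_proc X" by (induct L) auto
lemma scong_News: "scong X Y \<Longrightarrow> scong (News L X) (News L Y)"
  by (induct L) (auto intro: scong.s_new)

lemma scong_News_extr: "set L \<inter> fn B = {} \<Longrightarrow> scong (News L (PPar X B)) (PPar (News L X) B)"
proof (induct L)
  case Nil thus ?case by (simp add: scong.s_refl)
next
  case (Cons n L)
  have "scong (News (n # L) (PPar X B)) (PNew n (PPar (News L X) B))"
    using Cons by (auto intro: scong.s_new)
  also have "scong (PNew n (PPar (News L X) B)) (PNew n (PPar B (News L X)))"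
    by (rule scong.s_new[OF scong.s_par_comm])
  also have "scong (PNew n (PPar B (News L X))) (PPar B (PNew n (News L X)))"
    using Cons by (auto intro!: scong.s_sym[OF scong.s_extr])
  also have "scong (PPar B (PNew n (News L X))) (PPar (News (n # L) X) B)"
    by (simp add: scong.s_par_comm)
  finally show ?case .
qed

section \<open>A size bound for residuals\<close>

lemma add_le_mult2: "(x::nat) \<ge> 2 \<Longrightarrow> y \<ge> 2 \<Longrightarrow> x + y \<le> x * y"
proof (cases "x \<ge> y")
  case True
  assume "x \<ge> 2" "y \<ge> 2"
  hence "x * 2 \<le> x * y" by (intro mult_le_mono2)
  thus ?thesis using True by linarith
next
  case False
  assume "x \<ge> 2" "y \<ge> 2"
  hence "2 * y \<le> x * y" by (intro mult_le_mono1)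
  thus ?thesis using False by linarith
qed

lemma pow_ge_base: "(A::nat) \<ge> 1 \<Longrightarrow> a \<ge> 1 \<Longrightarrow> A \<le> A^a"
  using power_increasing[of 1 a A] by simp

lemma pow_add_ge: "(A::nat) \<ge> 2 \<Longrightarrow> a \<ge> 1 \<Longrightarrow> b \<ge> 1 \<Longrightarrow> A^a + A^b \<le> A^(a+b)"
proof -
  assume h: "A \<ge> 2" "a \<ge> 1" "b \<ge> 1"
  have "A^a \<ge> 2" using pow_ge_base[of A a] h by linarith
  moreover have "A^b \<ge> 2" using pow_ge_base[of A b] h by linarith
  ultimately have "A^a + A^b \<le> A^a * A^b" by (rule add_le_mult2)
  thus ?thesis by (simp add: power_add)
qed

lemma n_le_pow: "(A::nat) \<ge> 2 \<Longrightarrow> n \<le> A^n"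
proof -
  assume "A \<ge> 2"
  have "n < 2^n" by (rule less_exp)
  also have "2^n \<le> A^n" using \<open>A \<ge> 2\<close> by (rule power_mono) simp
  finally show ?thesis by simp
qed

lemma pow_bound_new: "(A::nat) \<ge> 2 \<Longrightarrow> x \<le> A^a \<Longrightarrow> x + 1 \<le> A^(a+1)"
proof -
  assume h: "A \<ge> 2" "x \<le> A^a"
  have "A^a \<ge> 1" using h by simp
  hence "A^a + 1 \<le> A^a * 2" by simp
  also have "\<dots> \<le> A^a * A" using h by (intro mult_le_mono2) simp
  finally show ?thesis using h by (simp add: power_add mult.commute)
qed

lemma pow_bound_par: "(A::nat) \<ge> 2 \<Longrightarrow> a \<ge> 1 \<Longrightarrow> x \<le> A^a \<Longrightarrow> s \<le> b \<Longrightarrow> x + s + 1 \<le> A^(a+b+1)"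
proof -
  assume h: "A \<ge> 2" "a \<ge> 1" "x \<le> A^a" "s \<le> b"
  have "A^a + A^(b+1) \<le> A^(a+(b+1))" using h by (intro pow_add_ge) auto
  moreover have "b + 1 \<le> A^(b+1)" using h n_le_pow by blast
  ultimately show ?thesis using h by (simp add: add.assoc)
qed

lemma pow_bound_par': "(A::nat) \<ge> 2 \<Longrightarrow> b \<ge> 1 \<Longrightarrow> x \<le> A^b \<Longrightarrow> s \<le> a \<Longrightarrow> s + x + 1 \<le> A^(a+b+1)"
  using pow_bound_par[of A b x s a] by (simp add: add.commute add.left_commute)

lemma pow_bound_rep: "(A::nat) \<ge> 2 \<Longrightarrow> w \<ge> 1 \<Longrightarrow> x \<le> A^(2*w+1) \<Longrightarrow> s \<le> w \<Longrightarrow> x + s + 2 \<le> A^(3*w+3)"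
proof -
  assume h: "A \<ge> 2" "w \<ge> 1" "x \<le> A^(2*w+1)" "s \<le> w"
  have "A^(2*w+1) + A^(w+2) \<le> A^((2*w+1)+(w+2))" using h by (intro pow_add_ge) auto
  moreover have "w + 2 \<le> A^(w+2)" using h n_le_pow by blast
  moreover have "(2*w+1)+(w+2) = 3*w+3" by simp
  hence "A^((2*w+1)+(w+2)) = A^(3*w+3)" by (simp only:)
  ultimately show ?thesis using h by linarith
qed

lemma pow_bound_unify: "(K::nat) \<ge> 1 \<Longrightarrow> a \<ge> 1 \<Longrightarrow> b \<ge> 1 \<Longrightarrow> x \<le> (2*K+3)^a \<Longrightarrow> y \<le> (2*K+3)^b \<Longrightarrow>
  l1 \<le> K \<Longrightarrow> l2 \<le> K \<Longrightarrow> l1 + l2 + (K*x + K*y + 1) \<le> (2*K+3)^(a+b+1)"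
proof -
  assume h: "K \<ge> 1" "a \<ge> 1" "b \<ge> 1" "x \<le> (2*K+3)^a" "y \<le> (2*K+3)^b" "l1 \<le> K" "l2 \<le> K"
  define A where "A = 2*K+3"
  have A2: "A \<ge> 2" by (simp add: A_def)
  have s: "A^a + A^b \<le> A^(a+b)" using A2 h by (intro pow_add_ge) auto
  have pa: "A^a \<ge> 1" "A^b \<ge> 1" using A2 by simp_all
  have "K*x + K*y \<le> K*(A^a + A^b)" using h by (simp add: A_def add_mult_distrib2 add_mono)
  moreover have "2*K + 1 \<le> (K+3)*(A^a + A^b)"
  proof -
    have "(K+3)*2 \<le> (K+3)*(A^a + A^b)" using pa by (intro mult_le_mono2) simp
    thus ?thesis by simp
  qed
  ultimately have "l1 + l2 + (K*x + K*y + 1) \<le> (2*K+3)*(A^a + A^b)" using h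
    by (simp add: algebra_simps)
  also have "\<dots> \<le> (2*K+3)*A^(a+b)" using s by (simp add: A_def)
  also have "\<dots> = A^(a+b+1)" by (simp add: A_def)
  finally show ?thesis by (simp add: A_def)
qed

definition size_base :: "proc \<Rightarrow> nat" where "size_base Y = 2 * max_pat_size Y + 3"
definition size_bound :: "proc \<Rightarrow> nat" where "size_bound Y = size_base Y ^ weight Y"

lemma size_base_ge2[simp]: "size_base Y \<ge> 2" by (simp add: size_base_def)

definition bounded_residual :: "proc \<Rightarrow> lab \<Rightarrow> proc \<Rightarrow> bool" where
  "bounded_residual Y \<mu> X \<longleftrightarrow> (\<exists>R. scong X R \<and> proc_size R \<le> size_bound Y \<and> fn R \<subseteq> fn Y \<union> lnames \<mu> \<and> wf_proc R)"

text \<open>A \<open>\<tau>\<close>-step may synchronise two copies of \<open>T\<close>, hence the larger exponent.\<close>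

definition rep_residual :: "proc \<Rightarrow> lab \<Rightarrow> proc \<Rightarrow> bool" where
  "rep_residual T \<mu> X \<longleftrightarrow> (\<exists>D. scong X (PPar D (PRep T)) \<and> wf_proc D \<and> fn D \<subseteq> fn T \<union> lnames \<mu> \<and>
     proc_size D \<le> (case \<mu> of Tau \<Rightarrow> size_base T ^ (2 * weight T + 1) | Lab ns p \<Rightarrow> size_base T ^ weight T) \<and>
     (case \<mu> of Tau \<Rightarrow> True | Lab ns p \<Rightarrow> (set ns \<union> bn p) \<inter> fn T = {}))"

text \<open>\<open>rep_unfolding T Y\<close>: \<open>Y\<close> is \<open>!T | T | \<dots> | T\<close> up to \<open>\<alpha>\<close>-conversion, i.e. a process
  reached from \<open>!T\<close> by repeatedly unfolding rule \<open>rep\<close>.\<close>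

inductive rep_unfolding :: "proc \<Rightarrow> proc \<Rightarrow> bool" where
  rep_unfolding_rep: "alpha T P0 \<Longrightarrow> rep_unfolding T (PRep P0)"
| rep_unfolding_par: "rep_unfolding T W \<Longrightarrow> alpha T Q \<Longrightarrow> rep_unfolding T (PPar W Q)"

inductive_cases rep_unfoldingE:
  "rep_unfolding T (PNew n P)" "rep_unfolding T (PCase p P)" "rep_unfolding T (PRep P)" "rep_unfolding T (PPar W Q)"

lemma rep_unfolding_simps [simp]:
  "\<not> rep_unfolding T (PNew n P)" "\<not> rep_unfolding T (PCase p P)" "rep_unfolding T (PRep P) \<longleftrightarrow> alpha T P"
  "rep_unfolding T (PPar W Q) \<longleftrightarrow> rep_unfolding T W \<and> alpha T Q"
  by (auto elim: rep_unfoldingE intro: rep_unfolding.intros)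

lemma scong_absorb_rep: "alpha T Q \<Longrightarrow> scong (PPar (PRep T) Q) (PRep T)"
proof -
  assume "alpha T Q"
  hence "scong (PPar (PRep T) Q) (PPar (PRep T) T)"
    by (rule scong.s_par[OF scong.s_refl scong.s_alpha[OF alpha.a_sym]])
  also have "scong (PPar (PRep T) T) (PPar T (PRep T))" by (rule scong.s_par_comm)
  also have "scong (PPar T (PRep T)) (PRep T)" by (rule scong.s_sym[OF scong.s_rep_unf])
  finally show ?thesis .
qed

lemma rep_unfolding_props: "rep_unfolding T Y \<Longrightarrow> wf_proc Y \<Longrightarrow>
  wf_proc T \<and> scong Y (PRep T) \<and> fn Y = fn T \<and> max_pat_size Y = max_pat_size T \<and> 3 * weight T + 3 \<le> weight Y"
proof (induct rule: rep_unfolding.induct)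
  case (rep_unfolding_rep T P0)
  have w: "wf_proc T" using rep_unfolding_rep alpha_wf by auto
  have "scong (PRep P0) (PRep T)" by (rule scong.s_rep[OF scong.s_alpha[OF alpha.a_sym[OF rep_unfolding_rep(1)]]])
  moreover have "fn P0 = fn T" using alpha_fn rep_unfolding_rep w by auto
  moreover have "max_pat_size P0 = max_pat_size T" "weight P0 = weight T" using alpha_sizes rep_unfolding_rep by auto
  ultimately show ?case using w by simp
next
  case (rep_unfolding_par T W Q)
  have IH: "wf_proc T" "scong W (PRep T)" "fn W = fn T" "max_pat_size W = max_pat_size T" "3 * weight T + 3 \<le> weight W"
    using rep_unfolding_par by auto
  have "fn Q = fn T" using alpha_fn rep_unfolding_par IH by auto
  moreover have "max_pat_size Q = max_pat_size T" using alpha_sizes rep_unfolding_par by auto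
  moreover have "scong (PPar W Q) (PRep T)"
  proof -
    have "scong (PPar W Q) (PPar (PRep T) Q)" by (rule scong.s_par[OF IH(2) scong.s_refl])
    also have "scong (PPar (PRep T) Q) (PRep T)" using rep_unfolding_par scong_absorb_rep by blast
    finally show ?thesis .
  qed
  ultimately show ?case using IH by auto
qed

lemma rep_unfolding_alpha: "rep_unfolding T Y \<Longrightarrow> alpha Y Y' \<Longrightarrow> wf_proc Y \<Longrightarrow> rep_unfolding T Y'"
proof (induct arbitrary: Y' rule: rep_unfolding.induct)
  case (rep_unfolding_rep T P0)
  obtain P1 where "Y' = PRep P1" "alpha P0 P1" using alpha_PRepD rep_unfolding_rep by blast
  thus ?case using rep_unfolding_rep by (meson alpha.a_trans rep_unfolding.rep_unfolding_rep)
next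
  case (rep_unfolding_par T W Q)
  obtain W' Q' where "Y' = PPar W' Q'" "alpha W W'" "alpha Q Q'" using alpha_PParD rep_unfolding_par by blast
  thus ?case using rep_unfolding_par by (meson alpha.a_trans rep_unfolding.rep_unfolding_par wf_proc.simps(2))
qed

lemma bounded_residual_case: "wf_proc P \<Longrightarrow> bounded_residual (PCase p P) (Lab [] p) P"
proof -
  assume "wf_proc P"
  have "proc_size P \<le> weight (PCase p P)" using proc_size_le_weight[of P] by simp
  also have "\<dots> \<le> size_bound (PCase p P)" unfolding size_bound_def by (rule n_le_pow) simp
  finally show ?thesis unfolding bounded_residual_def using \<open>wf_proc P\<close> by (auto intro!: exI[of _ P] scong.s_refl)
qed

lemma bounded_residual_new: "bounded_residual P \<mu> P' \<Longrightarrow> bounded_residual (PNew n P) \<mu> (PNew n P')"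
proof -
  assume "bounded_residual P \<mu> P'"
  then obtain R where R: "scong P' R" "proc_size R \<le> size_bound P" "fn R \<subseteq> fn P \<union> lnames \<mu>" "wf_proc R"
    by (auto simp: bounded_residual_def)
  have "proc_size (PNew n R) \<le> size_bound (PNew n P)"
    using R pow_bound_new[of "size_base P" "proc_size R" "weight P"] by (simp add: size_bound_def size_base_def)
  thus ?thesis using R unfolding bounded_residual_def by (intro exI[of _ "PNew n R"]) (auto intro: scong.s_new)
qed

lemma bounded_residual_open: "bounded_residual P (Lab ns p) P' \<Longrightarrow> bounded_residual (PNew m P) (Lab (ns @ [m]) p) P'"
proof -
  assume "bounded_residual P (Lab ns p) P'"
  then obtain R where R: "scong P' R" "proc_size R \<le> size_bound P" "fn R \<subseteq> fn P \<union> lnames (Lab ns p)" "wf_proc R"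
    by (auto simp: bounded_residual_def)
  have "size_bound P \<le> size_bound (PNew m P)" unfolding size_bound_def size_base_def by (simp add: power_increasing)
  thus ?thesis using R unfolding bounded_residual_def by (intro exI[of _ R]) auto
qed

lemma bounded_residual_par_left: "bounded_residual P \<mu> P' \<Longrightarrow> wf_proc Q \<Longrightarrow> bounded_residual (PPar P Q) \<mu> (PPar P' Q)"
proof -
  assume G: "bounded_residual P \<mu> P'" and wf: "wf_proc Q"
  then obtain R where R: "scong P' R" "proc_size R \<le> size_bound P" "fn R \<subseteq> fn P \<union> lnames \<mu>" "wf_proc R"
    by (auto simp: bounded_residual_def)
  have "size_bound P \<le> size_base (PPar P Q) ^ weight P" unfolding size_bound_def by (rule power_mono) (simp_all add: size_base_def)
  hence "proc_size R + proc_size Q + 1 \<le> size_base (PPar P Q) ^ (weight P + weight Q + 1)"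
    using R proc_size_le_weight[of Q] weight_pos[of P] by (intro pow_bound_par) auto
  hence "proc_size (PPar R Q) \<le> size_bound (PPar P Q)" by (simp add: size_bound_def)
  thus ?thesis using R wf unfolding bounded_residual_def
    by (intro exI[of _ "PPar R Q"]) (auto intro: scong.s_par scong.s_refl)
qed

lemma bounded_residual_par_right: "bounded_residual Q \<mu> Q' \<Longrightarrow> wf_proc P \<Longrightarrow> bounded_residual (PPar P Q) \<mu> (PPar P Q')"
proof -
  assume G: "bounded_residual Q \<mu> Q'" and wf: "wf_proc P"
  then obtain R where R: "scong Q' R" "proc_size R \<le> size_bound Q" "fn R \<subseteq> fn Q \<union> lnames \<mu>" "wf_proc R"
    by (auto simp: bounded_residual_def)
  have "size_bound Q \<le> size_base (PPar P Q) ^ weight Q" unfolding size_bound_def by (rule power_mono) (simp_all add: size_base_def)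
  hence "proc_size P + proc_size R + 1 \<le> size_base (PPar P Q) ^ (weight P + weight Q + 1)"
    using R proc_size_le_weight[of P] weight_pos[of Q] by (intro pow_bound_par') auto
  hence "proc_size (PPar P R) \<le> size_bound (PPar P Q)" by (simp add: size_bound_def)
  thus ?thesis using R wf unfolding bounded_residual_def
    by (intro exI[of _ "PPar P R"]) (auto intro: scong.s_par scong.s_refl)
qed

lemma bounded_residual_rep: "rep_residual P \<mu> P' \<Longrightarrow> wf_proc P \<Longrightarrow> bounded_residual (PRep P) \<mu> P'"
proof -
  assume "rep_residual P \<mu> P'" and wf: "wf_proc P"
  then obtain D where D: "scong P' (PPar D (PRep P))" "wf_proc D" "fn D \<subseteq> fn P \<union> lnames \<mu>"
      "proc_size D \<le> (case \<mu> of Tau \<Rightarrow> size_base P ^ (2 * weight P + 1) | Lab ns p \<Rightarrow> size_base P ^ weight P)"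
    unfolding rep_residual_def by blast
  have "size_base P ^ weight P \<le> size_base P ^ (2 * weight P + 1)" by (rule power_increasing) (auto simp: size_base_def)
  hence "proc_size D \<le> size_base P ^ (2 * weight P + 1)" using D(4) by (auto split: lab.splits)
  hence "proc_size D + proc_size P + 2 \<le> size_base P ^ (3 * weight P + 3)"
    using proc_size_le_weight[of P] weight_pos[of P] by (intro pow_bound_rep) auto
  hence "proc_size (PPar D (PRep P)) \<le> size_bound (PRep P)" by (simp add: size_bound_def size_base_def)
  thus ?thesis unfolding bounded_residual_def using D wf by (intro exI[of _ "PPar D (PRep P)"]) auto
qed

lemma bounded_residual_alpha: "alpha P Q \<Longrightarrow> wf_proc P \<Longrightarrow> bounded_residual Q \<mu> Q' \<Longrightarrow> alpha Q' P' \<Longrightarrow> bounded_residual P \<mu> P'"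
proof -
  assume a: "alpha P Q" "wf_proc P" "bounded_residual Q \<mu> Q'" "alpha Q' P'"
  have "size_bound Q = size_bound P" "fn Q = fn P" using alpha_sizes[OF a(1)] alpha_fn[OF a(1,2)]
    by (auto simp: size_bound_def size_base_def)
  thus ?thesis using a unfolding bounded_residual_def by (metis scong.s_alpha alpha.a_sym scong.s_trans)
qed

lemma rep_residual_scong: "scong X X' \<Longrightarrow> rep_residual T \<mu> X' \<Longrightarrow> rep_residual T \<mu> X"
  unfolding rep_residual_def by (blast intro: scong.s_trans)

lemma rep_residual_par_left: "rep_unfolding T (PPar P Q) \<Longrightarrow> rep_residual T \<mu> P' \<Longrightarrow> rep_residual T \<mu> (PPar P' Q)"
proof -
  assume rep_unfolding: "rep_unfolding T (PPar P Q)" and "rep_residual T \<mu> P'"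
  then obtain D where D: "scong P' (PPar D (PRep T))" and rest: "wf_proc D"
    "fn D \<subseteq> fn T \<union> lnames \<mu>"
    "proc_size D \<le> (case \<mu> of Tau \<Rightarrow> size_base T ^ (2 * weight T + 1) | Lab ns p \<Rightarrow> size_base T ^ weight T)"
    "(case \<mu> of Tau \<Rightarrow> True | Lab ns p \<Rightarrow> (set ns \<union> bn p) \<inter> fn T = {})"
    unfolding rep_residual_def by blast
  have aQ: "alpha T Q" using rep_unfolding by simp
  have "scong (PPar P' Q) (PPar (PPar D (PRep T)) Q)" by (rule scong.s_par[OF D scong.s_refl])
  also have "scong \<dots> (PPar D (PPar (PRep T) Q))" by (rule scong.s_sym[OF scong.s_par_assoc])
  also have "scong \<dots> (PPar D (PRep T))" by (rule scong.s_par[OF scong.s_refl scong_absorb_rep[OF aQ]])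
  finally show ?thesis using rest unfolding rep_residual_def by blast
qed

lemma rep_residual_par_right:
  assumes rep_unfolding: "rep_unfolding T (PPar P Q)" and wf: "wf_proc P" and G: "bounded_residual Q \<mu> Q'"
    and fresh: "case \<mu> of Tau \<Rightarrow> True | Lab ns p \<Rightarrow> (set ns \<union> bn p) \<inter> fn P = {}"
  shows "rep_residual T \<mu> (PPar P Q')"
proof -
  obtain R where R: "scong Q' R" "proc_size R \<le> size_bound Q" "fn R \<subseteq> fn Q \<union> lnames \<mu>" "wf_proc R"
    using G by (auto simp: bounded_residual_def)
  have tP: "rep_unfolding T P" and aQ: "alpha T Q" using rep_unfolding by simp_all
  note tf = rep_unfolding_props[OF tP wf]
  have fQ: "fn Q = fn T" using alpha_fn aQ tf by auto
  have "scong (PPar P Q') (PPar P R)" by (rule scong.s_par[OF scong.s_refl R(1)])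
  also have "scong \<dots> (PPar R P)" by (rule scong.s_par_comm)
  also have "scong \<dots> (PPar R (PRep T))" using tf by (intro scong.s_par[OF scong.s_refl]) auto
  finally have sc: "scong (PPar P Q') (PPar R (PRep T))" .
  have szR: "proc_size R \<le> size_base T ^ weight T" using R alpha_sizes[OF aQ] by (simp add: size_bound_def size_base_def)
  have "size_base T ^ weight T \<le> size_base T ^ (2 * weight T + 1)" by (rule power_increasing) (auto simp: size_base_def)
  hence "proc_size R \<le> size_base T ^ (2 * weight T + 1)" using szR by linarith
  thus ?thesis unfolding rep_residual_def
    using sc R fQ szR fresh tf by (intro exI[of _ R]) (auto split: lab.splits)
qed

lemma csubst_residual_bounds:
  assumes u: "unifier_ok \<sigma> p q" and sc: "scong P' R" and wf: "wf_proc P'" "wf_proc R"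
    and sub: "csubst \<sigma> P' P''" and fnR: "fn R \<subseteq> F \<union> lnames (Lab ms p)"
    and fnp: "fnp p \<subseteq> F \<union> set ms" and K: "pat_size q \<le> K"
  shows "\<exists>Z. scong P'' Z \<and> csubst \<sigma> R Z \<and> wf_proc Z \<and> fn Z \<subseteq> F \<union> fnp q \<union> set ms
    \<and> proc_size Z \<le> K * proc_size R"
proof -
  have \<sigma>: "is_subst \<sigma>" using unifier_ok_is_subst[OF u] .
  obtain Z where Z: "csubst \<sigma> R Z" "scong P'' Z" using csubst_scong[OF sc wf(1) \<sigma> sub] by blast
  have "fn Z \<subseteq> (fn R - dom \<sigma>) \<union> ran_names \<sigma>" by (rule csubst_fn[OF Z(1) wf(2) is_subst_comm_ran[OF \<sigma>]])
  moreover have "dom \<sigma> = bn p" using u by (simp add: unifier_ok_def)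
  moreover have "ran_names \<sigma> \<subseteq> fnp q" by (rule unifier_ok_ran_names[OF u])
  ultimately have fnZ: "fn Z \<subseteq> F \<union> fnp q \<union> set ms" using fnR fnp by (simp, blast)
  have "K \<ge> 1" using pat_size_pos[of q] K by linarith
  moreover have "\<forall>r\<in>ran \<sigma>. pat_size r \<le> K" using unifier_ok_pat_size[OF u] K by (meson le_trans)
  ultimately have "proc_size Z \<le> K * proc_size R" by (rule csubst_proc_size[OF Z(1) is_subst_comm_ran[OF \<sigma>]])
  thus ?thesis using Z fnZ csubst_wf[OF Z(1) wf(2) is_subst_comm_ran[OF \<sigma>]] by blast
qed

lemma bounded_residual_unify:
  assumes wf: "wf_proc P'" "wf_proc Q'" and l: "label_ok P ms p" "label_ok Q ns q"
    and u: "unify p q = Some (\<sigma>, \<rho>)" and G: "bounded_residual P (Lab ms p) P'" "bounded_residual Q (Lab ns q) Q'"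
    and sub: "csubst \<sigma> P' P''" "csubst \<rho> Q' Q''"
  shows "bounded_residual (PPar P Q) Tau (News (ms @ ns) (PPar P'' Q''))"
proof -
  define K where "K = max_pat_size (PPar P Q)"
  have uo: "unifier_ok \<sigma> p q" "unifier_ok \<rho> q p" using unify_unifier_ok u by auto
  have pq: "pat_size p \<le> K" "pat_size q \<le> K" using l by (auto simp: label_ok_def K_def)
  have fnp: "fnp p \<subseteq> fn P \<union> set ms" "fnp q \<subseteq> fn Q \<union> set ns" using l by (auto simp: label_ok_def)
  obtain R1 where R1: "scong P' R1" "proc_size R1 \<le> size_bound P" "fn R1 \<subseteq> fn P \<union> lnames (Lab ms p)" "wf_proc R1"
    using G(1) by (auto simp: bounded_residual_def)
  obtain R2 where R2: "scong Q' R2" "proc_size R2 \<le> size_bound Q" "fn R2 \<subseteq> fn Q \<union> lnames (Lab ns q)" "wf_proc R2"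
    using G(2) by (auto simp: bounded_residual_def)
  obtain Z1 where Z1: "scong P'' Z1" "wf_proc Z1" "fn Z1 \<subseteq> fn P \<union> fnp q \<union> set ms" "proc_size Z1 \<le> K * proc_size R1"
    using csubst_residual_bounds[OF uo(1) R1(1) wf(1) R1(4) sub(1) R1(3) fnp(1) pq(2)] by blast
  obtain Z2 where Z2: "scong Q'' Z2" "wf_proc Z2" "fn Z2 \<subseteq> fn Q \<union> fnp p \<union> set ns" "proc_size Z2 \<le> K * proc_size R2"
    using csubst_residual_bounds[OF uo(2) R2(1) wf(2) R2(4) sub(2) R2(3) fnp(2) pq(1)] by blast
  have K1: "K \<ge> 1" unfolding K_def by (rule max_pat_size_pos)
  have lens: "length ms \<le> K" "length ns \<le> K" using label_ok_len[OF l(1)] label_ok_len[OF l(2)]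
    by (auto simp: K_def)
  have b1: "proc_size R1 \<le> (2*K+3) ^ weight P"
    using R1(2) power_mono[of "size_base P" "2*K+3" "weight P"] by (simp add: size_bound_def size_base_def K_def)
  have b2: "proc_size R2 \<le> (2*K+3) ^ weight Q"
    using R2(2) power_mono[of "size_base Q" "2*K+3" "weight Q"] by (simp add: size_bound_def size_base_def K_def)
  have "length ms + length ns + (K * proc_size R1 + K * proc_size R2 + 1) \<le> (2*K+3) ^ (weight P + weight Q + 1)"
    using pow_bound_unify[OF K1 weight_pos weight_pos b1 b2 lens] .
  hence "proc_size (News (ms @ ns) (PPar Z1 Z2)) \<le> size_bound (PPar P Q)"
    using Z1(4) Z2(4) by (simp add: size_bound_def size_base_def K_def)
  moreover have "fn (News (ms @ ns) (PPar Z1 Z2)) \<subseteq> fn (PPar P Q) \<union> lnames Tau"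
    using Z1(3) Z2(3) fnp by auto
  moreover have "scong (News (ms @ ns) (PPar P'' Q'')) (News (ms @ ns) (PPar Z1 Z2))"
    by (rule scong_News[OF scong.s_par[OF Z1(1) Z2(1)]])
  ultimately show ?thesis using Z1(2) Z2(2) unfolding bounded_residual_def
    by (intro exI[of _ "News (ms @ ns) (PPar Z1 Z2)"]) auto
qed

lemma csubst_par_fresh_right:
  assumes "csubst \<sigma> (PPar D B) Z" "wf_proc D" "wf_proc B" "dom \<sigma> \<inter> fn B = {}"
  shows "\<exists>E B'. Z = PPar E B' \<and> csubst \<sigma> D E \<and> alpha B B'"
proof -
  obtain W0 where W0: "alpha (PPar D B) W0" "bnames W0 \<inter> subst_names \<sigma> = {}" "Z = nsubst \<sigma> W0"
    using assms(1) by (auto simp: csubst_def)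
  obtain A0 B0 where AB: "W0 = PPar A0 B0" "alpha D A0" "alpha B B0"
    using alpha_PParD[OF W0(1)] assms(2,3) by auto
  have "all_names B0 \<subseteq> fn B0 \<union> bnames B0" by (rule all_names_subset)
  moreover have "fn B0 = fn B" using alpha_fn[OF AB(3) assms(3)] by simp
  moreover have "bnames B0 \<inter> dom \<sigma> = {}" using W0(2) AB(1) by auto
  ultimately have "dom \<sigma> \<inter> all_names B0 = {}" using assms(4) by blast
  hence "nsubst \<sigma> B0 = B0" by (rule nsubst_ident)
  moreover have "csubst \<sigma> D (nsubst \<sigma> A0)" using W0 AB by (intro csubst_intro) auto
  ultimately show ?thesis using W0(3) AB by auto
qed

lemma rep_residual_unify:
  assumes rep_unfolding: "rep_unfolding T (PPar P Q)" and wf: "wf_proc P" "wf_proc P'" "wf_proc Q'"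
    and l: "label_ok P ms p" "label_ok Q ns q" and u: "unify p q = Some (\<sigma>, \<rho>)"
    and S: "rep_residual T (Lab ms p) P'" and G: "bounded_residual Q (Lab ns q) Q'" and fresh: "set ns \<inter> fn P = {}"
    and sub: "csubst \<sigma> P' P''" "csubst \<rho> Q' Q''"
  shows "rep_residual T Tau (News (ms @ ns) (PPar P'' Q''))"
proof -
  have tP: "rep_unfolding T P" and aQ: "alpha T Q" using rep_unfolding by simp_all
  note tf = rep_unfolding_props[OF tP wf(1)]
  have fQ: "fn Q = fn T" and sQ: "max_pat_size Q = max_pat_size T" "weight Q = weight T"
    using alpha_fn aQ tf alpha_sizes[OF aQ] by auto
  define K where "K = max_pat_size T"
  have uo: "unifier_ok \<sigma> p q" "unifier_ok \<rho> q p" using unify_unifier_ok u by auto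
  have \<sigma>: "is_subst \<sigma>" using unifier_ok_is_subst[OF uo(1)] .
  have pq: "pat_size p \<le> K" "pat_size q \<le> K" using l tf sQ by (auto simp: label_ok_def K_def)
  have fnp: "fnp p \<subseteq> fn T \<union> set ms" "fnp q \<subseteq> fn T \<union> set ns" using l tf fQ by (auto simp: label_ok_def)
  obtain D1 where D1: "scong P' (PPar D1 (PRep T))" "wf_proc D1" "fn D1 \<subseteq> fn T \<union> lnames (Lab ms p)"
      "proc_size D1 \<le> size_base T ^ weight T" "(set ms \<union> bn p) \<inter> fn T = {}"
    using S unfolding rep_residual_def by auto
  obtain R2 where R2: "scong Q' R2" "proc_size R2 \<le> size_bound Q" "fn R2 \<subseteq> fn T \<union> lnames (Lab ns q)" "wf_proc R2"
    using G fQ by (auto simp: bounded_residual_def)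
  obtain Z2 where Z2: "scong Q'' Z2" "wf_proc Z2" "fn Z2 \<subseteq> fn T \<union> fnp p \<union> set ns" "proc_size Z2 \<le> K * proc_size R2"
    using csubst_residual_bounds[OF uo(2) R2(1) wf(3) R2(4) sub(2) R2(3) fnp(2) pq(1)] by blast
  obtain Z1 where Z1: "csubst \<sigma> (PPar D1 (PRep T)) Z1" "scong P'' Z1"
    using csubst_scong[OF D1(1) wf(2) \<sigma> sub(1)] by blast
  have "dom \<sigma> \<inter> fn (PRep T) = {}" using uo(1) D1(5) by (auto simp: unifier_ok_def)
  then obtain E1 B0 where E1: "Z1 = PPar E1 B0" "csubst \<sigma> D1 E1" "alpha (PRep T) B0"
    using csubst_par_fresh_right[OF Z1(1) D1(2)] tf by auto
  obtain E1' where E1': "scong E1 E1'" "wf_proc E1'" "fn E1' \<subseteq> fn T \<union> fnp q \<union> set ms"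
      "proc_size E1' \<le> K * proc_size D1"
    using csubst_residual_bounds[OF uo(1) scong.s_refl D1(2) D1(2) E1(2) D1(3) fnp(1) pq(2)] by blast
  have fB0: "fn B0 = fn T" using alpha_fn[OF E1(3)] tf by simp
  define D where "D = News (ms @ ns) (PPar E1' Z2)"
  have "scong P'' (PPar E1' B0)"
    using Z1(2) scong.s_par[OF E1'(1) scong.s_refl] unfolding E1(1) by (rule scong.s_trans)
  hence "scong (News (ms @ ns) (PPar P'' Q'')) (News (ms @ ns) (PPar (PPar E1' B0) Z2))"
    using Z2(1) by (intro scong_News scong.s_par)
  also have "scong \<dots> (News (ms @ ns) (PPar (PPar E1' Z2) B0))"
  proof (rule scong_News)
    have "scong (PPar (PPar E1' B0) Z2) (PPar E1' (PPar B0 Z2))" by (rule scong.s_sym[OF scong.s_par_assoc])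
    also have "scong \<dots> (PPar E1' (PPar Z2 B0))" by (rule scong.s_par[OF scong.s_refl scong.s_par_comm])
    also have "scong \<dots> (PPar (PPar E1' Z2) B0)" by (rule scong.s_par_assoc)
    finally show "scong (PPar (PPar E1' B0) Z2) (PPar (PPar E1' Z2) B0)" .
  qed
  also have "scong \<dots> (PPar D B0)"
    unfolding D_def using fB0 D1(5) fresh tf by (intro scong_News_extr) auto
  also have "scong \<dots> (PPar D (PRep T))"
    by (rule scong.s_par[OF scong.s_refl scong.s_alpha[OF alpha.a_sym[OF E1(3)]]])
  finally have sc: "scong (News (ms @ ns) (PPar P'' Q'')) (PPar D (PRep T))" .
  have K1: "K \<ge> 1" unfolding K_def by (rule max_pat_size_pos)
  have b2: "proc_size R2 \<le> (2*K+3) ^ weight T" using R2(2) sQ by (simp add: size_bound_def size_base_def K_def)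
  have b1: "proc_size D1 \<le> (2*K+3) ^ weight T" using D1(4) by (simp add: size_base_def K_def)
  have lens: "length ms \<le> K" "length ns \<le> K"
    using label_ok_len[OF l(1)] label_ok_len[OF l(2)] tf sQ by (auto simp: K_def)
  have "length ms + length ns + (K * proc_size D1 + K * proc_size R2 + 1) \<le> (2*K+3) ^ (weight T + weight T + 1)"
    using pow_bound_unify[OF K1 weight_pos weight_pos b1 b2 lens] .
  moreover have "(2*K+3) ^ (weight T + weight T + 1) = size_base T ^ (2 * weight T + 1)"
    by (simp add: size_base_def K_def mult_2[symmetric])
  moreover have "proc_size D = length ms + length ns + (proc_size E1' + proc_size Z2 + 1)" by (simp add: D_def)
  ultimately have "proc_size D \<le> size_base T ^ (2 * weight T + 1)" using E1'(4) Z2(4) by linarith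
  moreover have "fn D \<subseteq> fn T \<union> lnames Tau" using E1'(3) Z2(3) fnp by (auto simp: D_def)
  moreover have "wf_proc D" using E1'(2) Z2(2) by (simp add: D_def)
  ultimately show ?thesis unfolding rep_residual_def using sc by (intro exI[of _ D]) simp
qed

lemma ltr_residual_bounds:
  "ltr Y \<mu> X \<Longrightarrow> wf_proc Y \<Longrightarrow> bounded_residual Y \<mu> X \<and> (\<forall>T. rep_unfolding T Y \<longrightarrow> rep_residual T \<mu> X)"
proof (induct rule: ltr.induct)
  case (t_case p P)
  thus ?case using bounded_residual_case by simp
next
  case (t_resnon P \<mu> P' n)
  hence "bounded_residual P \<mu> P'" by simp
  thus ?case using bounded_residual_new by simp
next
  case (t_open P ns p P' m)
  hence "bounded_residual P (Lab ns p) P'" by simp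
  thus ?case using bounded_residual_open by simp
next
  case (t_unify P ms p P' Q ns q Q' \<sigma> \<rho> P'' Q'')
  have wf: "wf_proc P" "wf_proc Q" "wf_proc P'" "wf_proc Q'"
    using t_unify.prems ltr_wf t_unify(1,3) by auto
  have l: "label_ok P ms p" "label_ok Q ns q" using ltr_label_ok t_unify(1,3) wf by blast+
  have G: "bounded_residual P (Lab ms p) P'" "bounded_residual Q (Lab ns q) Q'" and S: "\<forall>T. rep_unfolding T P \<longrightarrow> rep_residual T (Lab ms p) P'"
    using t_unify(2,4) wf by blast+
  have "rep_residual T Tau (News (ms @ ns) (PPar P'' Q''))" if rep_unfolding: "rep_unfolding T (PPar P Q)" for T
  proof (rule rep_residual_unify[OF rep_unfolding wf(1,3,4) l t_unify(5) _ G(2) t_unify(7,9,10)])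
    show "rep_residual T (Lab ms p) P'" using S rep_unfolding by simp
  qed
  thus ?case using bounded_residual_unify[OF wf(3,4) l t_unify(5) G t_unify(9,10)] by blast
next
  case (t_parint_l P P' Q)
  hence IH: "bounded_residual P Tau P'" "\<forall>T. rep_unfolding T P \<longrightarrow> rep_residual T Tau P'" by simp_all
  have "rep_residual T Tau (PPar P' Q)" if "rep_unfolding T (PPar P Q)" for T
    using that IH(2) rep_residual_par_left[OF that] by simp
  thus ?case using bounded_residual_par_left IH(1) t_parint_l.prems by simp
next
  case (t_parint_r Q Q' P)
  hence G: "bounded_residual Q Tau Q'" by simp
  have "rep_residual T Tau (PPar P Q')" if "rep_unfolding T (PPar P Q)" for T
    using rep_residual_par_right[OF that _ G] t_parint_r.prems by simp
  thus ?case using bounded_residual_par_right[OF G] t_parint_r.prems by simp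
next
  case (t_parext_l P ns p P' Q)
  hence IH: "bounded_residual P (Lab ns p) P'" "\<forall>T. rep_unfolding T P \<longrightarrow> rep_residual T (Lab ns p) P'" by simp_all
  have "rep_residual T (Lab ns p) (PPar P' Q)" if "rep_unfolding T (PPar P Q)" for T
    using that IH(2) rep_residual_par_left[OF that] by simp
  thus ?case using bounded_residual_par_left IH(1) t_parext_l.prems by simp
next
  case (t_parext_r Q ns p Q' P)
  hence G: "bounded_residual Q (Lab ns p) Q'" by simp
  have "rep_residual T (Lab ns p) (PPar P Q')" if "rep_unfolding T (PPar P Q)" for T
    using rep_residual_par_right[OF that _ G] t_parext_r(3) t_parext_r.prems by simp
  thus ?case using bounded_residual_par_right[OF G] t_parext_r.prems by simp
next
  case (t_rep P \<mu> P')
  have IH: "\<forall>T. rep_unfolding T (PPar (PRep P) P) \<longrightarrow> rep_residual T \<mu> P'" using t_rep by simp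
  have "rep_residual T \<mu> P'" if "alpha T P" for T using IH that rep_unfolding_par rep_unfolding_rep by blast
  thus ?case using bounded_residual_rep alpha.a_refl t_rep.prems by simp
next
  case (t_alpha P Q \<mu> Q' P')
  have "wf_proc Q" using t_alpha alpha_wf by blast
  hence IH: "bounded_residual Q \<mu> Q'" "\<forall>T. rep_unfolding T Q \<longrightarrow> rep_residual T \<mu> Q'" using t_alpha(3) by blast+
  have "rep_residual T \<mu> P'" if "rep_unfolding T P" for T
    using IH(2) rep_unfolding_alpha[OF that t_alpha(1,5)] rep_residual_scong scong.s_alpha[OF alpha.a_sym[OF t_alpha(4)]]
    by blast
  thus ?case using bounded_residual_alpha IH t_alpha by blast
qed

section \<open>Finitely many processes of bounded size\<close>

lemma card_bn_le: "card (bn p) \<le> pat_size p"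
proof (induct p)
  case (PComp p q)
  have "card (bn (PComp p q)) \<le> card (bn p) + card (bn q)" by (simp add: card_Un_le)
  thus ?case using PComp by simp
qed auto

lemma card_bnames_le: "card (bnames X) \<le> proc_size X"
proof (induct X)
  case (PPar P Q)
  have "card (bnames (PPar P Q)) \<le> card (bnames P) + card (bnames Q)" by (simp add: card_Un_le)
  thus ?case using PPar by simp
next
  case (PNew x P)
  have "card (bnames (PNew x P)) \<le> Suc (card (bnames P))" by (simp add: card_insert_if)
  thus ?case using PNew by simp
next
  case (PCase p P)
  have "card (bnames (PCase p P)) \<le> card (bn p) + card (bnames P)" by (simp add: card_Un_le)
  thus ?case using PCase card_bn_le[of p] by simp
qed auto

lemma finite_bounded_pats: "finite M \<Longrightarrow> finite {p. pat_size p \<le> n \<and> pat_names p \<subseteq> M}"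
proof (induct n)
  case 0
  have "{p. pat_size p \<le> 0 \<and> pat_names p \<subseteq> M} = {}"
  proof (rule equals0I)
    fix p assume "p \<in> {p. pat_size p \<le> 0 \<and> pat_names p \<subseteq> M}"
    thus False using pat_size_pos[of p] by simp
  qed
  thus ?case by (metis finite.emptyI)
next
  case (Suc n)
  let ?S = "{p. pat_size p \<le> n \<and> pat_names p \<subseteq> M}"
  have "{p. pat_size p \<le> Suc n \<and> pat_names p \<subseteq> M} \<subseteq>
    PBind ` M \<union> PVar ` M \<union> PProt ` M \<union> (\<lambda>(a,b). PComp a b) ` (?S \<times> ?S)"
  proof
    fix p assume "p \<in> {p. pat_size p \<le> Suc n \<and> pat_names p \<subseteq> M}"
    thus "p \<in> PBind ` M \<union> PVar ` M \<union> PProt ` M \<union> (\<lambda>(a,b). PComp a b) ` (?S \<times> ?S)"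
      by (cases p) auto
  qed
  moreover have "finite (PBind ` M \<union> PVar ` M \<union> PProt ` M \<union> (\<lambda>(a,b). PComp a b) ` (?S \<times> ?S))"
    using Suc by auto
  ultimately show ?case by (rule finite_subset)
qed

lemma finite_bounded_procs: "finite M \<Longrightarrow> finite {R. proc_size R \<le> n \<and> all_names R \<subseteq> M}"
proof (induct n)
  case 0
  have "{R. proc_size R \<le> 0 \<and> all_names R \<subseteq> M} = {}"
  proof (rule equals0I)
    fix R assume "R \<in> {R. proc_size R \<le> 0 \<and> all_names R \<subseteq> M}"
    thus False using proc_size_pos[of R] by simp
  qed
  thus ?case by (metis finite.emptyI)
next
  case (Suc n)
  let ?S = "{R. proc_size R \<le> n \<and> all_names R \<subseteq> M}"
  let ?Q = "{p. pat_size p \<le> Suc n \<and> pat_names p \<subseteq> M}"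
  have "{R. proc_size R \<le> Suc n \<and> all_names R \<subseteq> M} \<subseteq>
    {PZero} \<union> (\<lambda>(a,b). PPar a b) ` (?S \<times> ?S) \<union> PRep ` ?S \<union> (\<lambda>(x,P). PNew x P) ` (M \<times> ?S)
      \<union> (\<lambda>(p,P). PCase p P) ` (?Q \<times> ?S)"
  proof
    fix R assume "R \<in> {R. proc_size R \<le> Suc n \<and> all_names R \<subseteq> M}"
    thus "R \<in> {PZero} \<union> (\<lambda>(a,b). PPar a b) ` (?S \<times> ?S) \<union> PRep ` ?S \<union> (\<lambda>(x,P). PNew x P) ` (M \<times> ?S)
      \<union> (\<lambda>(p,P). PCase p P) ` (?Q \<times> ?S)"
      by (cases R) (auto simp: image_iff)
  qed
  moreover have "finite ({PZero} \<union> (\<lambda>(a,b). PPar a b) ` (?S \<times> ?S) \<union> PRep ` ?S \<union> (\<lambda>(x,P). PNew x P) ` (M \<times> ?S)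
      \<union> (\<lambda>(p,P). PCase p P) ` (?Q \<times> ?S))"
    using Suc finite_bounded_pats[OF Suc(2), of "Suc n"] by auto
  ultimately show ?case by (rule finite_subset)
qed

lemma finite_lnames[simp]: "finite (lnames \<mu>)" by (cases \<mu>) auto

lemma alpha_canonical_names:
  assumes "finite N" "Pool \<inter> N = {}" "finite Pool" "card Pool \<ge> b"
    "proc_size R \<le> b" "fn R \<subseteq> N" "wf_proc R"
  shows "\<exists>R'. alpha R R' \<and> proc_size R' \<le> b \<and> all_names R' \<subseteq> N \<union> Pool"
proof -
  obtain R0 where R0: "alpha R R0" "bnames R0 \<inter> (N \<union> Pool) = {}"
    using alpha_fresh_bnames[of "N \<union> Pool" R] assms by auto
  have fn0: "fn R0 = fn R" using alpha_fn R0 assms by auto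
  have sz0: "proc_size R0 = proc_size R" using alpha_sizes R0 by auto
  have wf0: "wf_proc R0" using alpha_wf R0 assms by auto
  define ds where "ds = sorted_list_of_set (bnames R0)"
  have ds: "distinct ds" "set ds = bnames R0" by (auto simp: ds_def)
  have "length ds = card (bnames R0)" using ds by (metis distinct_card)
  also have "\<dots> \<le> proc_size R0" by (rule card_bnames_le)
  finally have "length ds \<le> card Pool" using sz0 assms by linarith
  define cs where "cs = take (length ds) (sorted_list_of_set Pool)"
  have cs: "set cs \<subseteq> Pool" "distinct cs" "length cs = length ds"
  proof -
    show "set cs \<subseteq> Pool" using assms(3) by (auto simp: cs_def dest: in_set_takeD)
    show "distinct cs" by (simp add: cs_def)
    show "length cs = length ds" using \<open>length ds \<le> card Pool\<close> assms(3) by (simp add: cs_def)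
  qed
  define xs where "xs = zip ds cs"
  have m: "map fst xs = ds" "map snd xs = cs" using cs by (auto simp: xs_def)
  have f: "fst ` set xs = bnames R0" "snd ` set xs = set cs" using ds by (metis list.set_map m)+
  have d: "distinct (map fst xs @ map snd xs)" using m ds cs R0 by auto
  define g where "g = swaps xs"
  have fixg: "\<forall>z\<in>fn R0. g z = z"
  proof
    fix z assume "z \<in> fn R0"
    hence "z \<in> N" using fn0 assms by auto
    hence "z \<notin> fst ` set xs" "z \<notin> snd ` set xs" using f R0 cs assms by auto
    thus "g z = z" unfolding g_def by (rule swaps_other)
  qed
  have a: "alpha R0 (map_proc g R0)" using alpha_map_proc_fixing_fn[OF _ wf0 fixg] by (simp add: g_def)
  have "all_names (map_proc g R0) = g ` all_names R0" by simp
  also have "\<dots> \<subseteq> g ` (fn R0 \<union> bnames R0)" using all_names_subset by blast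
  also have "\<dots> = fn R0 \<union> g ` bnames R0" using fixg by (auto simp: image_Un)
  also have "g ` bnames R0 = set cs" using swaps_image_fst[OF d] f by (simp add: g_def)
  finally have "all_names (map_proc g R0) \<subseteq> N \<union> Pool" using fn0 assms cs by auto
  moreover have "alpha R (map_proc g R0)" by (rule alpha.a_trans[OF R0(1) a])
  moreover have "proc_size (map_proc g R0) \<le> b" using sz0 assms by simp
  ultimately show ?thesis by blast
qed

lemma scong_equiv_class: "scong X Y \<Longrightarrow> scong_rel `` {X} = scong_rel `` {Y}"
  by (auto simp: scong_rel_def intro: scong.s_trans scong.s_sym)

lemma finite_quotient_scong_bounded:
  assumes N: "finite N"
    and bounded: "\<And>X. X \<in> S \<Longrightarrow> \<exists>R. scong X R \<and> proc_size R \<le> b \<and> fn R \<subseteq> N \<and> wf_proc R"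
  shows "finite (S // scong_rel)"
proof -
  obtain cs where cs: "length cs = b" "distinct cs" "set cs \<inter> N = {}"
    using fresh_list[OF N] by blast
  define Fin where "Fin = {R. proc_size R \<le> b \<and> all_names R \<subseteq> N \<union> set cs}"
  have "finite Fin" unfolding Fin_def using finite_bounded_procs N by simp
  moreover have "S // scong_rel \<subseteq> (\<lambda>R. scong_rel `` {R}) ` Fin"
  proof
    fix C assume "C \<in> S // scong_rel"
    then obtain X where X: "X \<in> S" "C = scong_rel `` {X}" by (auto simp: quotient_def)
    then obtain R where R: "scong X R" "proc_size R \<le> b" "fn R \<subseteq> N" "wf_proc R"
      using bounded by blast
    have "card (set cs) \<ge> b" using cs by (simp add: distinct_card)
    then obtain R' where R': "alpha R R'" "proc_size R' \<le> b" "all_names R' \<subseteq> N \<union> set cs"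
      using alpha_canonical_names[OF N _ _ _ R(2-4)] cs by blast
    have "scong X R'" using R(1) R'(1) by (meson scong.s_alpha scong.s_trans)
    hence "C = scong_rel `` {R'}" using X scong_equiv_class by auto
    moreover have "R' \<in> Fin" using R' by (simp add: Fin_def)
    ultimately show "C \<in> (\<lambda>R. scong_rel `` {R}) ` Fin" by blast
  qed
  ultimately show ?thesis using finite_subset by blast
qed

theorem proposition3p7:
  fixes P :: proc and \<mu> :: lab
  assumes "wf_proc P"
  shows "finite ({P'. ltr P \<mu> P'} // scong_rel)"
proof (rule finite_quotient_scong_bounded)
  show "finite (fn P \<union> lnames \<mu>)" by simp
  fix X assume "X \<in> {P'. ltr P \<mu> P'}"
  hence "bounded_residual P \<mu> X" using ltr_residual_bounds assms by blast
  thus "\<exists>R. scong X R \<and> proc_size R \<le> size_bound P \<and> fn R \<subseteq> fn P \<union> lnames \<mu> \<and> wf_proc R"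
    by (simp add: bounded_residual_def)
qed

end
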